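(* Let $\mu^\pm$ be compactly supported probability measures on $\mathbb{R}^d$ and $c(x,y)=\frac12|x-y|^2$. Assume Brenier's optimal transport map $T=\nabla f$ from $\mu^-$ to $\mu^+$ is $M$-Lipschitz. Let $\gamma_\varepsilon$ be the optimal entropic plan. Then, as $\varepsilon\to0$, \[\int_{\mathbb{R}^d\times\mathbb{R}^d}|y-T(x)|^2\,\mathrm{d}\gamma_\varepsilon(x,y)\le M\big(d\varepsilon\log(1/\varepsilon)+O(\varepsilon)\big).\] In particular, if $T_\varepsilon$ denotes the barycentric projection of $\gamma_\varepsilon$ (i.e. $T_\varepsilon(x)$ is the conditional expectation of $Y$ given $X=x$ when $(X,Y)\sim\gamma_\varepsilon$), then \[\|T_\varepsilon-T\|^2_{L^2(\mu^-)}\le M\big(d\varepsilon\log(1/\varepsilon)+O(\varepsilon)\big).\]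
   Context: Let $\Pi(\mu^-,\mu^+)$ be the set of couplings of $\mu^-,\mu^+$ and $\mathrm{Ent}(p\,|\,q)=\int\rho\log\rho\,\mathrm{d}q$ if $p=\rho q$, $+\infty$ otherwise. The optimal entropic plan $\gamma_\varepsilon$ is the unique minimizer over $\gamma\in\Pi(\mu^-,\mu^+)$ of $\frac12\int|x-y|^2\,\mathrm{d}\gamma+\varepsilon\,\mathrm{Ent}(\gamma\,|\,\mu^-\otimes\mu^+)$. Brenier's map: there is a convex lsc function $f$ on $\mathbb{R}^d$ such that $\gamma\in\Pi(\mu^-,\mu^+)$ minimizes $\int|x-y|^2\,\mathrm{d}\gamma$ iff $\operatorname{spt}\gamma\subseteq\{(x,y):y\in\partial f(x)\}$; the hypothesis is that $f$ is differentiable with $\nabla f$ $M$-Lipschitz and $(\mathrm{id},\nabla f)_\#\mu^-$ is the optimal plan, and $T=\nabla f$. *)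

theory Defs
  imports "HOL-Probability.Probability"
begin

definition compactly_supported_prob :: "'a::euclidean_space measure \<Rightarrow> bool" where
  "compactly_supported_prob \<mu> \<longleftrightarrow>
     sets \<mu> = sets borel \<and> prob_space \<mu> \<and> (\<exists>K. compact K \<and> (AE x in \<mu>. x \<in> K))"

definition coupling :: "'a measure \<Rightarrow> 'b measure \<Rightarrow> ('a \<times> 'b) measure \<Rightarrow> bool" where
  "coupling \<mu> \<nu> \<gamma> \<longleftrightarrow>
     sets \<gamma> = sets (\<mu> \<Otimes>\<^sub>M \<nu>) \<and> distr \<gamma> \<mu> fst = \<mu> \<and> distr \<gamma> \<nu> snd = \<nu>"

text \<open>The integral is split into positive and negative parts (the negative part is finite
  for finite q, since rho log rho >= -1/e).\<close>
definition rel_ent :: "'b measure \<Rightarrow> 'b measure \<Rightarrow> ereal" where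
  "rel_ent p q =
    (if \<exists>\<rho>\<in>borel_measurable q. (\<forall>x. 0 \<le> \<rho> x) \<and> p = density q (\<lambda>x. ennreal (\<rho> x)) then
       (let \<rho> = (SOME \<rho>. \<rho> \<in> borel_measurable q \<and> (\<forall>x. 0 \<le> \<rho> x) \<and>
                          p = density q (\<lambda>x. ennreal (\<rho> x)))
        in enn2ereal (\<integral>\<^sup>+ x. ennreal (\<rho> x * ln (\<rho> x)) \<partial>q)
           - enn2ereal (\<integral>\<^sup>+ x. ennreal (- (\<rho> x * ln (\<rho> x))) \<partial>q))
     else \<infinity>)"

definition quad_cost :: "'a::euclidean_space \<times> 'a \<Rightarrow> real" where
  "quad_cost = (\<lambda>(x, y). (1/2) * (norm (x - y))\<^sup>2)"

definition entropic_functional ::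
  "'a::euclidean_space measure \<Rightarrow> 'a measure \<Rightarrow> real \<Rightarrow> ('a \<times> 'a) measure \<Rightarrow> ereal" where
  "entropic_functional \<mu> \<nu> \<epsilon> \<gamma> =
     ereal (\<integral> z. quad_cost z \<partial>\<gamma>) + ereal \<epsilon> * rel_ent \<gamma> (\<mu> \<Otimes>\<^sub>M \<nu>)"

definition optimal_entropic_plan ::
  "'a::euclidean_space measure \<Rightarrow> 'a measure \<Rightarrow> real \<Rightarrow> ('a \<times> 'a) measure \<Rightarrow> bool" where
  "optimal_entropic_plan \<mu> \<nu> \<epsilon> \<gamma> \<longleftrightarrow>
     coupling \<mu> \<nu> \<gamma> \<and>
     (\<forall>\<gamma>'. coupling \<mu> \<nu> \<gamma>' \<longrightarrow> entropic_functional \<mu> \<nu> \<epsilon> \<gamma> \<le> entropic_functional \<mu> \<nu> \<epsilon> \<gamma>')"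

definition optimal_plan ::
  "'a::euclidean_space measure \<Rightarrow> 'a measure \<Rightarrow> ('a \<times> 'a) measure \<Rightarrow> bool" where
  "optimal_plan \<mu> \<nu> \<gamma> \<longleftrightarrow>
     coupling \<mu> \<nu> \<gamma> \<and>
     (\<forall>\<gamma>'. coupling \<mu> \<nu> \<gamma>' \<longrightarrow>
        (\<integral> (x, y). (norm (x - y))\<^sup>2 \<partial>\<gamma>) \<le> (\<integral> (x, y). (norm (x - y))\<^sup>2 \<partial>\<gamma>'))"

text \<open>Barycentric projection: Tb(x) = E[Y | X = x] for (X,Y) ~ gamma, i.e. Tb is a
  Borel, mu-integrable function with  int_{A x R^d} y d gamma = int_A Tb d mu  for all Borel A.\<close>
definition barycentric_projection ::
  "('a::euclidean_space \<times> 'a) measure \<Rightarrow> 'a measure \<Rightarrow> ('a \<Rightarrow> 'a) \<Rightarrow> bool" where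
  "barycentric_projection \<gamma> \<mu> Tb \<longleftrightarrow>
     Tb \<in> borel_measurable \<mu> \<and> integrable \<mu> Tb \<and>
     (\<forall>A \<in> sets \<mu>. (\<integral> (x, y). indicator A x *\<^sub>R y \<partial>\<gamma>) = (\<integral> x. indicator A x *\<^sub>R Tb x \<partial>\<mu>))"

end

theory Submission
  imports Defs
begin

(* Cocoercivity of the Brenier map T = grad f bounds |y - T x|^2 by 2 M times the gap
   c(x, y) - phi x - psi y between the quadratic cost and the Kantorovich potentials, for y in
   the range of T. Integrated against a coupling, this bounds its squared deviation from the graph
   of T by 2 M times its excess cost over the optimal plan. For the optimal entropic plan the excess
   cost is at most that of any competitor plus eps times the competitor's entropy. The competitor is
   a block plan: cut the support of mu into grid cubes of side sqrt eps and send each cube onto the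
   T-image of its own mass, independently. The descent lemma makes its excess cost at most
   M d eps / 2, and its entropy is at most the log of the number of cubes,
   (d / 2) ln (1 / eps) + O(1). The barycentric projection is a conditional expectation, hence an
   L^2 projection, so its distance to T is dominated by the deviation of the plan. *)

section \<open>Convex functions with Lipschitz gradient\<close>

lemma convex_above_tangent_plane:
  fixes f :: "'a::real_inner \<Rightarrow> real"
  assumes convex: "convex_on UNIV f" and gradient: "\<And>x. (f has_derivative (\<lambda>h. T x \<bullet> h)) (at x)"
  shows "f x + T x \<bullet> (z - x) \<le> f z"
proof -
  define g where "g t = f (x + t *\<^sub>R (z - x))" for t :: real
  have "convex_on UNIV g"
  proof (rule convex_onI)
    fix s t u :: real assume "0 < s" "s < 1"
    moreover have "x + ((1 - s) * t + s * u) *\<^sub>R (z - x)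
        = (1 - s) *\<^sub>R (x + t *\<^sub>R (z - x)) + s *\<^sub>R (x + u *\<^sub>R (z - x))"
      by (simp add: algebra_simps)
    ultimately show "g ((1 - s) *\<^sub>R t + s *\<^sub>R u) \<le> (1 - s) * g t + s * g u"
      using convex_onD[OF convex, of s "x + t *\<^sub>R (z - x)" "x + u *\<^sub>R (z - x)"] by (simp add: g_def)
  qed simp
  moreover have "(g has_real_derivative (T x \<bullet> (z - x))) (at 0)"
  proof -
    have "((\<lambda>t. x + t *\<^sub>R (z - x)) has_derivative (\<lambda>t. t *\<^sub>R (z - x))) (at 0)"
      by (auto intro!: derivative_eq_intros)
    from has_derivative_compose[OF this gradient[of "x + 0 *\<^sub>R (z - x)"]]
    show ?thesis
      by (simp add: g_def[abs_def] o_def has_field_derivative_def mult_commute_abs)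
  qed
  ultimately have "T x \<bullet> (z - x) * (1 - 0) \<le> g 1 - g 0"
    by (intro convex_on_imp_above_tangent[where A = UNIV]) auto
  then show ?thesis by (simp add: g_def)
qed

lemma lipschitz_gradient_quadratic_upper_bound:
  fixes f :: "'a::real_inner \<Rightarrow> real"
  assumes gradient: "\<And>x. (f has_derivative (\<lambda>h. T x \<bullet> h)) (at x)"
    and lip: "M-lipschitz_on UNIV T"
  shows "f z \<le> f x + T x \<bullet> (z - x) + M / 2 * (norm (z - x))\<^sup>2"
proof -
  define d where "d = z - x"
  define h where "h t = f (x + t *\<^sub>R d) - t * (T x \<bullet> d) - M / 2 * t\<^sup>2 * (norm d)\<^sup>2" for t :: real
  have "h 1 \<le> h 0"
  proof (rule DERIV_nonpos_imp_nonincreasing[of 0 1 h])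
    fix t :: real assume t: "0 \<le> t" "t \<le> 1"
    have "((\<lambda>t. x + t *\<^sub>R d) has_derivative (\<lambda>s. s *\<^sub>R d)) (at t)"
      by (auto intro!: derivative_eq_intros)
    from has_derivative_compose[OF this gradient[of "x + t *\<^sub>R d"]]
    have "((\<lambda>t. f (x + t *\<^sub>R d)) has_real_derivative (T (x + t *\<^sub>R d) \<bullet> d)) (at t)"
      by (simp add: o_def has_field_derivative_def mult_commute_abs)
    then have "(h has_real_derivative ((T (x + t *\<^sub>R d) - T x) \<bullet> d - M * t * (norm d)\<^sup>2)) (at t)"
      unfolding h_def by (auto intro!: derivative_eq_intros simp: inner_diff_left)
    moreover have "(T (x + t *\<^sub>R d) - T x) \<bullet> d \<le> M * t * (norm d)\<^sup>2"
    proof -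
      have "(T (x + t *\<^sub>R d) - T x) \<bullet> d \<le> norm (T (x + t *\<^sub>R d) - T x) * norm d"
        by (rule norm_cauchy_schwarz)
      also have "\<dots> \<le> M * norm (t *\<^sub>R d) * norm d"
        using lipschitz_onD[OF lip, of "x + t *\<^sub>R d" x] by (intro mult_right_mono) (simp_all add: dist_norm)
      also have "\<dots> = M * t * (norm d)\<^sup>2" using t by (simp add: power2_eq_square)
      finally show ?thesis .
    qed
    ultimately show "\<exists>y. (h has_real_derivative y) (at t) \<and> y \<le> 0" by auto
  qed simp
  then show ?thesis by (simp add: h_def d_def algebra_simps)
qed

text \<open>Evaluate the quadratic upper bound at z in the point w = z - (T z - T x) / M and compare
  with the tangent plane at x.\<close>

lemma lipschitz_gradient_cocoercive:
  fixes f :: "'a::real_inner \<Rightarrow> real"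
  assumes convex: "convex_on UNIV f" and gradient: "\<And>x. (f has_derivative (\<lambda>h. T x \<bullet> h)) (at x)"
    and lip: "M-lipschitz_on UNIV T"
  shows "(norm (T z - T x))\<^sup>2 \<le> 2 * M * (f z - f x - T x \<bullet> (z - x))"
proof (cases "M = 0")
  case True
  then have "T z = T x" using lipschitz_onD[OF lip, of z x] by simp
  then show ?thesis using convex_above_tangent_plane[OF convex gradient, of x z] True by simp
next
  case False
  then have M: "M > 0" using lipschitz_on_nonneg[OF lip] by simp
  define g where "g = T z - T x"
  define w where "w = z - (1 / M) *\<^sub>R g"
  have "f x + T x \<bullet> (w - x) \<le> f w" by (rule convex_above_tangent_plane[OF convex gradient])
  also have "f w \<le> f z + T z \<bullet> (w - z) + M / 2 * (norm (w - z))\<^sup>2"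
    by (rule lipschitz_gradient_quadratic_upper_bound[OF gradient lip])
  also have "M / 2 * (norm (w - z))\<^sup>2 = (1 / (2 * M)) * (g \<bullet> g)"
    using M by (simp add: w_def power2_eq_square field_simps flip: power2_norm_eq_inner)
  finally have "(1 / M) * ((T z - T x) \<bullet> g) - (1 / (2 * M)) * (g \<bullet> g) \<le> f z - f x - T x \<bullet> (z - x)"
    by (simp add: w_def inner_diff_right inner_diff_left algebra_simps)
  then show ?thesis using M by (simp add: g_def power2_norm_eq_inner field_simps)
qed

text \<open>By continuity the supremum may be taken over a countable dense set.\<close>

lemma borel_measurable_convex_conjugate:
  fixes f :: "'a::euclidean_space \<Rightarrow> real"
  assumes cont: "continuous_on UNIV f"
  shows "(\<lambda>y. SUP z. ereal (z \<bullet> y - f z)) \<in> borel_measurable borel"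
proof -
  obtain D :: "'a set" where D: "countable D" "\<And>X. open X \<Longrightarrow> X \<noteq> {} \<Longrightarrow> \<exists>d\<in>D. d \<in> X"
    by (rule countable_dense_setE) blast
  have "(SUP z. ereal (z \<bullet> y - f z)) = (SUP z\<in>D. ereal (z \<bullet> y - f z))" for y
  proof (rule antisym[OF SUP_least SUP_subset_mono])
    fix z
    show "ereal (z \<bullet> y - f z) \<le> (SUP z\<in>D. ereal (z \<bullet> y - f z))"
    proof (rule ccontr)
      let ?S = "SUP z\<in>D. ereal (z \<bullet> y - f z)"
      assume "\<not> ?thesis"
      moreover have "open {z. (\<lambda>_. ?S) z < ereal (z \<bullet> y - f z)}"
        by (rule open_Collect_less) (auto intro!: continuous_intros cont continuous_on_ereal)
      ultimately obtain d where "d \<in> D" "?S < ereal (d \<bullet> y - f d)"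
        using D(2)[of "{z. ?S < ereal (z \<bullet> y - f z)}"] by (auto simp: not_le)
      then show False by (meson SUP_upper leD)
    qed
  qed auto
  then have "(\<lambda>y. SUP z. ereal (z \<bullet> y - f z)) = (\<lambda>y. SUP z\<in>D. ereal (z \<bullet> y - f z))"
    by (simp add: fun_eq_iff)
  then show ?thesis
    by (simp only:) (rule borel_measurable_SUP[OF D(1)],
        auto intro!: borel_measurable_continuous_onI continuous_intros)
qed

lemma convex_conjugate_at_gradient:
  fixes f :: "'a::real_inner \<Rightarrow> real"
  assumes convex: "convex_on UNIV f" and gradient: "\<And>x. (f has_derivative (\<lambda>h. T x \<bullet> h)) (at x)"
  shows "(SUP z. ereal (z \<bullet> T x - f z)) = ereal (x \<bullet> T x - f x)"
proof (rule antisym[OF SUP_least SUP_upper])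
  fix z
  have "f x + T x \<bullet> (z - x) \<le> f z" by (rule convex_above_tangent_plane[OF convex gradient])
  then show "ereal (z \<bullet> T x - f z) \<le> ereal (x \<bullet> T x - f x)"
    by (simp add: inner_diff_right inner_commute)
qed simp

section \<open>Relative entropy\<close>

lemma xlnx_ge_minus_one: "0 \<le> (t::real) \<Longrightarrow> t - 1 \<le> t * ln t"
proof (cases "t = 0")
  case False
  assume "0 \<le> t"
  with False have t: "0 < t" by simp
  then have "ln (1 / t) \<le> 1 / t - 1" by (intro ln_le_minus_one) simp
  then have "t * (- ln t) \<le> t * (1 / t - 1)" using t by (intro mult_left_mono) (auto simp: ln_div)
  then show ?thesis using t by (simp add: algebra_simps)
qed simp

lemma ennreal_neg_xlnx_le:
  assumes "0 \<le> (t::real)"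
  shows "ennreal (- (t * ln t)) + ennreal t \<le> ennreal (t * ln t) + 1"
proof (cases "0 \<le> t * ln t")
  case True
  then have "ennreal t \<le> ennreal (t * ln t + 1)"
    using xlnx_ge_minus_one[OF assms] by (intro ennreal_leI) simp
  moreover have "ennreal (t * ln t + 1) = ennreal (t * ln t) + 1"
    using True by (simp add: ennreal_plus)
  ultimately show ?thesis using True by (simp add: ennreal_neg)
next
  case False
  then have "ennreal (- (t * ln t) + t) \<le> 1"
    using xlnx_ge_minus_one[OF assms] by (intro ennreal_le_1[THEN iffD2]) simp
  moreover have "ennreal (- (t * ln t) + t) = ennreal (- (t * ln t)) + ennreal t"
    using False assms by (intro ennreal_plus) auto
  ultimately have "ennreal (- (t * ln t)) + ennreal t \<le> 1" by (simp only:)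
  then show ?thesis using False by (simp add: ennreal_neg)
qed

lemma rel_ent_density:
  assumes q: "sigma_finite_measure q" and [measurable]: "\<rho> \<in> borel_measurable q"
    and nonneg: "\<And>x. 0 \<le> \<rho> x"
  shows "rel_ent (density q (\<lambda>x. ennreal (\<rho> x))) q
    = enn2ereal (\<integral>\<^sup>+ x. ennreal (\<rho> x * ln (\<rho> x)) \<partial>q)
      - enn2ereal (\<integral>\<^sup>+ x. ennreal (- (\<rho> x * ln (\<rho> x))) \<partial>q)"
proof -
  let ?P = "\<lambda>\<rho>'. \<rho>' \<in> borel_measurable q \<and> (\<forall>x. 0 \<le> \<rho>' x) \<and>
    density q (\<lambda>x. ennreal (\<rho> x)) = density q (\<lambda>x. ennreal (\<rho>' x))"
  have ex: "?P \<rho>" using nonneg by simp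
  define \<rho>' where "\<rho>' = Eps ?P"
  have \<rho>': "?P \<rho>'" unfolding \<rho>'_def by (rule someI[where P = ?P, OF ex])
  then have [measurable]: "\<rho>' \<in> borel_measurable q" by simp
  have "AE x in q. ennreal (\<rho> x) = ennreal (\<rho>' x)"
    using \<rho>' sigma_finite_measure.density_unique_iff[OF q, of "\<lambda>x. ennreal (\<rho> x)" "\<lambda>x. ennreal (\<rho>' x)"]
    by simp
  then have "AE x in q. \<rho>' x = \<rho> x" by eventually_elim (use \<rho>' nonneg in auto)
  then show ?thesis
    using ex unfolding rel_ent_def Let_def \<rho>'_def[symmetric]
    by (auto intro!: arg_cong2[where f = "\<lambda>a b. enn2ereal a - enn2ereal b"] nn_integral_cong_AE
        elim!: eventually_mono)
qed

lemma rel_ent_density_le: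
  assumes "sigma_finite_measure q" "\<rho> \<in> borel_measurable q" "\<And>x. 0 \<le> \<rho> x"
  shows "rel_ent (density q (\<lambda>x. ennreal (\<rho> x))) q \<le> enn2ereal (\<integral>\<^sup>+ x. ennreal (\<rho> x * ln (\<rho> x)) \<partial>q)"
  unfolding rel_ent_density[OF assms] by (simp add: ereal_diff_le_self)

lemma rel_ent_nonneg:
  assumes p: "prob_space p" and q: "prob_space q"
  shows "0 \<le> rel_ent p q"
proof (cases "\<exists>\<rho>\<in>borel_measurable q. (\<forall>x. 0 \<le> \<rho> x) \<and> p = density q (\<lambda>x. ennreal (\<rho> x))")
  case False
  then have "rel_ent p q = \<infinity>" unfolding rel_ent_def by (intro if_not_P)
  then show ?thesis by simp
next
  case True
  then obtain \<rho> where [measurable]: "\<rho> \<in> borel_measurable q" and nonneg: "\<And>x. 0 \<le> \<rho> x"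
    and p_eq: "p = density q (\<lambda>x. ennreal (\<rho> x))" by blast
  have q_sf: "sigma_finite_measure q" using q by (simp add: prob_space_imp_sigma_finite)
  define P where "P = (\<integral>\<^sup>+ x. ennreal (\<rho> x * ln (\<rho> x)) \<partial>q)"
  define N where "N = (\<integral>\<^sup>+ x. ennreal (- (\<rho> x * ln (\<rho> x))) \<partial>q)"
  have "(\<integral>\<^sup>+ x. ennreal (\<rho> x) \<partial>q) = emeasure p (space p)"
    unfolding p_eq by (simp add: emeasure_density)
  then have mass: "(\<integral>\<^sup>+ x. ennreal (\<rho> x) \<partial>q) = 1" using p by (simp add: prob_space.emeasure_space_1)
  have "N + 1 = (\<integral>\<^sup>+ x. ennreal (- (\<rho> x * ln (\<rho> x))) + ennreal (\<rho> x) \<partial>q)"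
    unfolding N_def mass[symmetric] by (rule nn_integral_add[symmetric]) auto
  also have "\<dots> \<le> (\<integral>\<^sup>+ x. ennreal (\<rho> x * ln (\<rho> x)) + 1 \<partial>q)"
    by (intro nn_integral_mono ennreal_neg_xlnx_le nonneg)
  also have "\<dots> = P + 1"
    unfolding P_def using q by (subst nn_integral_add) (auto simp: prob_space.emeasure_space_1)
  finally have "N \<le> P" by (simp add: add.commute ennreal_add_left_cancel_le)
  moreover have "N \<noteq> \<infinity>"
  proof -
    have "- (\<rho> x * ln (\<rho> x)) \<le> 1" for x
      using xlnx_ge_minus_one[OF nonneg[of x]] nonneg[of x] by linarith
    then have "N \<le> (\<integral>\<^sup>+ x. 1 \<partial>q)"
      unfolding N_def by (intro nn_integral_mono) (simp add: ennreal_le_1)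
    then show ?thesis using q by (auto simp: prob_space.emeasure_space_1 top_unique)
  qed
  ultimately show ?thesis
    unfolding p_eq rel_ent_density[OF q_sf \<open>\<rho> \<in> borel_measurable q\<close> nonneg] P_def[symmetric] N_def[symmetric]
    by (cases N; cases P) (auto simp: ennreal_le_iff)
qed

lemma mult_ln_le_mult_ln:
  fixes r b :: real
  assumes "0 \<le> r" "r \<le> b"
  shows "r * ln r \<le> r * ln b"
  using assms by (cases "r = 0") (auto intro!: mult_left_mono ln_mono)

lemma entropy_le_ln_card:
  fixes w :: "'i \<Rightarrow> real"
  assumes fin: "finite I" and pos: "\<And>i. i \<in> I \<Longrightarrow> 0 < w i" and sum: "(\<Sum>i\<in>I. w i) = 1"
  shows "(\<Sum>i\<in>I. w i * ln (1 / w i)) \<le> ln (card I)"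
proof -
  define N where "N = real (card I)"
  have N: "N > 0" unfolding N_def using fin sum by (auto simp: card_gt_0_iff)
  have "(\<Sum>i\<in>I. w i * ln (1 / w i)) = (\<Sum>i\<in>I. w i * ln (1 / (w i * N)) + w i * ln N)"
    using pos N by (intro sum.cong) (auto simp: ln_div ln_mult algebra_simps)
  also have "\<dots> = (\<Sum>i\<in>I. w i * ln (1 / (w i * N))) + ln N"
    by (simp add: sum.distrib sum flip: sum_distrib_right)
  also have "(\<Sum>i\<in>I. w i * ln (1 / (w i * N))) \<le> (\<Sum>i\<in>I. w i * (1 / (w i * N) - 1))"
    using pos N by (intro sum_mono mult_left_mono ln_le_minus_one) (auto intro: less_imp_le)
  also have "\<dots> = (\<Sum>i\<in>I. 1 / N - w i)"
    using N by (intro sum.cong) (auto simp: field_simps dest!: pos)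
  also have "\<dots> = 0" using N by (simp add: sum_subtractf sum N_def)
  finally show ?thesis by (simp add: N_def)
qed

section \<open>Kantorovich potentials of a Lipschitz Brenier map\<close>

lemma (in finite_measure) integrable_bounded_on:
  fixes g :: "'a \<Rightarrow> 'b::{banach,second_countable_topology}"
  assumes "g \<in> borel_measurable M" "AE x in M. x \<in> S" "\<And>x. x \<in> S \<Longrightarrow> norm (g x) \<le> B"
  shows "integrable M g"
  using assms(2) by (intro integrable_const_bound[of _ B] assms(1)) (auto elim: eventually_mono simp: assms(3))

lemma quad_cost_expand: "quad_cost (x, y) = (norm x)\<^sup>2 / 2 + (norm y)\<^sup>2 / 2 - x \<bullet> y"
  by (simp add: quad_cost_def power2_norm_eq_inner inner_diff_left inner_diff_right inner_commute
      algebra_simps)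

lemma quad_cost_nonneg: "0 \<le> quad_cost z"
  by (simp add: quad_cost_def case_prod_beta)

lemma borel_measurable_quad_cost[measurable]: "quad_cost \<in> borel_measurable (borel \<Otimes>\<^sub>M borel)"
  unfolding quad_cost_def by measurable

locale lipschitz_brenier_map =
  fixes \<mu> \<nu> :: "'a::euclidean_space measure" and f :: "'a \<Rightarrow> real" and T :: "'a \<Rightarrow> 'a"
    and M :: real and K :: "'a set"
  assumes sets_mu[measurable_cong]: "sets \<mu> = sets borel"
    and sets_nu[measurable_cong]: "sets \<nu> = sets borel"
    and prob_space_mu: "prob_space \<mu>" and prob_space_nu: "prob_space \<nu>"
    and compact_K: "compact K" and AE_K: "AE x in \<mu>. x \<in> K"
    and convex_f: "convex_on UNIV f"
    and gradient_f: "\<And>x. (f has_derivative (\<lambda>h. T x \<bullet> h)) (at x)"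
    and lipschitz_T: "M-lipschitz_on UNIV T"
    and push_forward: "\<nu> = distr \<mu> \<nu> T"
begin

sublocale mu: prob_space \<mu> by (rule prob_space_mu)
sublocale nu: prob_space \<nu> by (rule prob_space_nu)
sublocale mu_nu: pair_prob_space \<mu> \<nu> ..

lemma M_nonneg: "0 \<le> M"
  using lipschitz_T by (rule lipschitz_on_nonneg)

lemma continuous_f: "continuous_on UNIV f"
  by (meson continuous_at_imp_continuous_on gradient_f has_derivative_continuous)

lemma continuous_T: "continuous_on UNIV T"
  using lipschitz_T by (rule lipschitz_on_continuous_on)

lemma borel_measurable_T[measurable]: "T \<in> borel_measurable borel"
  using continuous_T by (rule borel_measurable_continuous_onI)

lemma borel_measurable_f[measurable]: "f \<in> borel_measurable borel"
  using continuous_f by (rule borel_measurable_continuous_onI)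

lemma measurable_T_mu_nu[measurable]: "T \<in> measurable \<mu> \<nu>"
  by (simp add: measurable_cong_sets[OF sets_mu sets_nu])

lemma space_mu: "space \<mu> = UNIV"
  using sets_eq_imp_space_eq[OF sets_mu] by simp

lemma space_nu: "space \<nu> = UNIV"
  using sets_eq_imp_space_eq[OF sets_nu] by simp

lemma compact_T_K: "compact (T ` K)"
  by (rule compact_continuous_image[OF continuous_on_subset[OF continuous_T] compact_K]) simp

lemma AE_nu: "AE y in \<nu>. y \<in> T ` K"
proof -
  have "AE x in \<mu>. T x \<in> T ` K" using AE_K by eventually_elim auto
  then show ?thesis
    using compact_imp_closed[OF compact_T_K]
    by (subst push_forward, subst AE_distr_iff) (auto simp: space_nu)
qed

lemma integrable_mu_bounded_on_K:
  fixes g :: "'a \<Rightarrow> 'b::{banach,second_countable_topology}"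
  assumes "g \<in> borel_measurable borel" "\<And>x. x \<in> K \<Longrightarrow> norm (g x) \<le> B"
  shows "integrable \<mu> g"
  using assms AE_K by (intro mu.integrable_bounded_on) (auto simp: measurable_cong_sets[OF sets_mu refl])

lemma integrable_mu_continuous_on_K:
  fixes g :: "'a \<Rightarrow> 'b::{banach,second_countable_topology}"
  assumes "g \<in> borel_measurable borel" "continuous_on K g"
  shows "integrable \<mu> g"
  using continuous_on_compact_bound[OF compact_K assms(2)] integrable_mu_bounded_on_K[OF assms(1)]
  by blast

text \<open>Kantorovich potentials for the quadratic cost: |x|^2/2 minus f, and |y|^2/2 minus the
  convex conjugate of f. The conjugate is finite on the range of T, which is all that is used.\<close>

definition phi :: "'a \<Rightarrow> real" where
  "phi x = (norm x)\<^sup>2 / 2 - f x"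

definition psi :: "'a \<Rightarrow> real" where
  "psi y = (norm y)\<^sup>2 / 2 - real_of_ereal (SUP z. ereal (z \<bullet> y - f z))"

lemma borel_measurable_phi[measurable]: "phi \<in> borel_measurable borel"
  unfolding phi_def by measurable

lemma borel_measurable_psi[measurable]: "psi \<in> borel_measurable borel"
  using borel_measurable_convex_conjugate[OF continuous_f] unfolding psi_def by measurable

lemma psi_T: "psi (T x) = (norm (T x))\<^sup>2 / 2 - x \<bullet> T x + f x"
  by (simp add: psi_def convex_conjugate_at_gradient[OF convex_f gradient_f])

lemma quad_cost_graph: "quad_cost (x, T x) = phi x + psi (T x)"
  by (simp add: quad_cost_expand psi_T phi_def)

lemma quad_cost_potentials_gap:
  "(norm (T x' - T x))\<^sup>2 \<le> 2 * M * (quad_cost (x, T x') - phi x - psi (T x'))"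
proof -
  have "quad_cost (x, T x') - phi x - psi (T x') = f x - f x' - T x' \<bullet> (x - x')"
    by (simp add: quad_cost_expand psi_T phi_def inner_diff_right inner_commute[of "T x'"])
  then show ?thesis
    using lipschitz_gradient_cocoercive[OF convex_f gradient_f lipschitz_T, of x x']
    by (simp add: norm_minus_commute)
qed

lemma quad_cost_exchange:
  "quad_cost (x, T x') + phi x' \<le> quad_cost (x', T x') + phi x + M / 2 * (norm (x - x'))\<^sup>2"
  using lipschitz_gradient_quadratic_upper_bound[OF gradient_f lipschitz_T, of x x']
  by (simp add: quad_cost_expand phi_def inner_diff_right inner_commute[of "T x'"] algebra_simps)

lemma phi_bounded: obtains B where "\<And>x. x \<in> K \<Longrightarrow> norm (phi x) \<le> B"
proof -
  have "continuous_on K phi"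
    unfolding phi_def by (auto intro!: continuous_intros continuous_on_subset[OF continuous_f])
  then show thesis using continuous_on_compact_bound[OF compact_K] that by blast
qed

lemma psi_bounded: obtains B where "\<And>y. y \<in> T ` K \<Longrightarrow> norm (psi y) \<le> B"
proof -
  have "continuous_on K (\<lambda>x. (norm (T x))\<^sup>2 / 2 - x \<bullet> T x + f x)"
    by (auto intro!: continuous_intros continuous_on_subset[OF continuous_T]
        continuous_on_subset[OF continuous_f])
  then obtain B where "\<And>x. x \<in> K \<Longrightarrow> norm ((norm (T x))\<^sup>2 / 2 - x \<bullet> T x + f x) \<le> B"
    using continuous_on_compact_bound[OF compact_K] by blast
  then show thesis by (intro that[of B]) (auto simp: psi_T)
qed

lemma sets_pair_mu_nu: "sets (\<mu> \<Otimes>\<^sub>M \<nu>) = sets (borel \<Otimes>\<^sub>M borel)"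
  by (simp add: sets_mu sets_nu cong: sets_pair_measure_cong)

lemma sets_pair_mu: "sets (N \<Otimes>\<^sub>M \<mu>) = sets (N \<Otimes>\<^sub>M borel)"
  by (simp add: sets_mu cong: sets_pair_measure_cong)

context
  fixes \<gamma> :: "('a \<times> 'a) measure"
  assumes coupling: "coupling \<mu> \<nu> \<gamma>"
begin

lemma sets_coupling: "sets \<gamma> = sets (borel \<Otimes>\<^sub>M borel)"
  using coupling unfolding coupling_def by (simp add: sets_mu sets_nu cong: sets_pair_measure_cong)

lemma measurable_fst_coupling[measurable]: "fst \<in> measurable \<gamma> \<mu>"
  by (simp add: measurable_cong_sets[OF sets_coupling sets_mu])

lemma measurable_snd_coupling[measurable]: "snd \<in> measurable \<gamma> \<nu>"
  by (simp add: measurable_cong_sets[OF sets_coupling sets_nu])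

lemma distr_fst_coupling: "distr \<gamma> \<mu> fst = \<mu>"
  using coupling by (simp add: coupling_def)

lemma distr_snd_coupling: "distr \<gamma> \<nu> snd = \<nu>"
  using coupling by (simp add: coupling_def)

lemma prob_space_coupling: "prob_space \<gamma>"
  using prob_space_distrD[OF measurable_fst_coupling] distr_fst_coupling prob_space_mu by simp

lemma AE_coupling: "AE z in \<gamma>. z \<in> K \<times> T ` K"
proof -
  have "AE z in \<gamma>. fst z \<in> K"
    using AE_K compact_imp_closed[OF compact_K]
    by (subst (asm) distr_fst_coupling[symmetric], subst (asm) AE_distr_iff) (auto simp: space_mu)
  moreover have "AE z in \<gamma>. snd z \<in> T ` K"
    using AE_nu compact_imp_closed[OF compact_T_K]
    by (subst (asm) distr_snd_coupling[symmetric], subst (asm) AE_distr_iff) (auto simp: space_nu)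
  ultimately show ?thesis by eventually_elim (auto simp: mem_Times_iff)
qed

lemma integrable_coupling_bounded:
  fixes g :: "'a \<times> 'a \<Rightarrow> 'b::{banach,second_countable_topology}"
  assumes "g \<in> borel_measurable (borel \<Otimes>\<^sub>M borel)" "\<And>z. z \<in> K \<times> T ` K \<Longrightarrow> norm (g z) \<le> B"
  shows "integrable \<gamma> g"
  using assms AE_coupling prob_space_coupling
  by (intro finite_measure.integrable_bounded_on) (auto simp: measurable_cong_sets[OF sets_coupling refl]
      prob_space_def)

lemma integrable_coupling_continuous:
  fixes g :: "'a \<times> 'a \<Rightarrow> 'b::{banach,second_countable_topology}"
  assumes "g \<in> borel_measurable (borel \<Otimes>\<^sub>M borel)" "continuous_on (K \<times> T ` K) g"
  shows "integrable \<gamma> g"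
  using continuous_on_compact_bound[OF compact_Times[OF compact_K compact_T_K] assms(2)]
  by (metis assms(1) integrable_coupling_bounded)

lemma integrable_quad_cost_coupling: "integrable \<gamma> quad_cost"
  by (rule integrable_coupling_continuous) (auto simp: quad_cost_def case_prod_beta intro!: continuous_intros)

lemma integral_potentials_coupling:
  shows "integrable \<gamma> (\<lambda>z. phi (fst z) + psi (snd z))"
    and "(\<integral>z. phi (fst z) + psi (snd z) \<partial>\<gamma>) = (\<integral>x. quad_cost (x, T x) \<partial>\<mu>)"
proof -
  obtain Bphi where Bphi: "\<And>x. x \<in> K \<Longrightarrow> norm (phi x) \<le> Bphi"
    using phi_bounded by blast
  obtain Bpsi where Bpsi: "\<And>y. y \<in> T ` K \<Longrightarrow> norm (psi y) \<le> Bpsi"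
    using psi_bounded by blast
  have int_gamma: "integrable \<gamma> (\<lambda>z. phi (fst z))" "integrable \<gamma> (\<lambda>z. psi (snd z))"
    by (auto intro!: integrable_coupling_bounded Bphi Bpsi)
  then show "integrable \<gamma> (\<lambda>z. phi (fst z) + psi (snd z))" by simp
  have "integrable \<mu> phi" "integrable \<mu> (\<lambda>x. psi (T x))"
    by (auto intro!: integrable_mu_bounded_on_K Bphi Bpsi)
  moreover have "(\<integral>z. phi (fst z) \<partial>\<gamma>) = (\<integral>x. phi x \<partial>\<mu>)"
    using integral_distr[OF measurable_fst_coupling, of phi] distr_fst_coupling by simp
  moreover have "(\<integral>z. psi (snd z) \<partial>\<gamma>) = (\<integral>x. psi (T x) \<partial>\<mu>)"
    using integral_distr[OF measurable_snd_coupling, of psi] distr_snd_coupling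
      integral_distr[OF measurable_T_mu_nu, of psi] push_forward by simp
  ultimately show "(\<integral>z. phi (fst z) + psi (snd z) \<partial>\<gamma>) = (\<integral>x. quad_cost (x, T x) \<partial>\<mu>)"
    using int_gamma by (simp add: quad_cost_graph)
qed

lemma coupling_deviation_le_cost_excess:
  "(\<integral>(x, y). (norm (y - T x))\<^sup>2 \<partial>\<gamma>)
    \<le> 2 * M * ((\<integral>z. quad_cost z \<partial>\<gamma>) - (\<integral>x. quad_cost (x, T x) \<partial>\<mu>))"
proof -
  have "(\<integral>(x, y). (norm (y - T x))\<^sup>2 \<partial>\<gamma>)
      \<le> (\<integral>z. 2 * M * (quad_cost z - (phi (fst z) + psi (snd z))) \<partial>\<gamma>)"
  proof (rule integral_mono_AE)
    show "integrable \<gamma> (\<lambda>(x, y). (norm (y - T x))\<^sup>2)"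
      by (rule integrable_coupling_continuous)
         (auto simp: case_prod_beta intro!: continuous_intros continuous_on_compose2[OF continuous_T])
    show "integrable \<gamma> (\<lambda>z. 2 * M * (quad_cost z - (phi (fst z) + psi (snd z))))"
      using integrable_quad_cost_coupling integral_potentials_coupling(1) by simp
    show "AE z in \<gamma>. (case z of (x, y) \<Rightarrow> (norm (y - T x))\<^sup>2)
        \<le> 2 * M * (quad_cost z - (phi (fst z) + psi (snd z)))"
      using AE_coupling by eventually_elim (auto simp: diff_diff_eq[symmetric] quad_cost_potentials_gap)
  qed
  also have "\<dots> = 2 * M * ((\<integral>z. quad_cost z \<partial>\<gamma>) - (\<integral>x. quad_cost (x, T x) \<partial>\<mu>))"
    using integrable_quad_cost_coupling integral_potentials_coupling by simp
  finally show ?thesis .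
qed

end

end

section \<open>Block plans\<close>

locale block_partition = lipschitz_brenier_map +
  fixes I :: "'i set" and Q :: "'i \<Rightarrow> 'a set" and D :: real
  assumes finite_I: "finite I"
    and sets_Q[measurable]: "\<And>i. Q i \<in> sets borel"
    and disjoint_Q: "\<And>i j. i \<in> I \<Longrightarrow> j \<in> I \<Longrightarrow> i \<noteq> j \<Longrightarrow> Q i \<inter> Q j = {}"
    and measure_Q_pos: "\<And>i. i \<in> I \<Longrightarrow> 0 < measure \<mu> (Q i)"
    and AE_cover: "AE x in \<mu>. \<exists>i\<in>I. x \<in> Q i"
    and diameter_Q: "\<And>i x x'. i \<in> I \<Longrightarrow> x \<in> Q i \<Longrightarrow> x' \<in> Q i \<Longrightarrow> (norm (x - x'))\<^sup>2 \<le> D"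
begin

definition mass :: "'i \<Rightarrow> real" where
  "mass i = measure \<mu> (Q i)"

lemma mass_pos: "i \<in> I \<Longrightarrow> 0 < mass i"
  by (simp add: mass_def measure_Q_pos)

lemma mass_le_1: "mass i \<le> 1"
  by (simp add: mass_def)

lemma emeasure_Q: "emeasure \<mu> (Q i) = ennreal (mass i)"
  by (simp add: mass_def mu.emeasure_eq_measure)

lemma sum_cells_eq:
  assumes "i \<in> I" "x \<in> Q i"
  shows "(\<Sum>j\<in>I. indicator (Q j) x * a j) = (a i :: 'b::semiring_1)"
proof -
  have "(\<Sum>j\<in>I. indicator (Q j) x * a j) = (\<Sum>j\<in>I. if j = i then a j else 0)"
    using assms disjoint_Q by (intro sum.cong refl) (auto simp: indicator_def)
  then show ?thesis using assms(1) finite_I by simp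
qed

lemma nn_integral_sum_cells:
  assumes [measurable]: "g \<in> borel_measurable borel"
  shows "(\<Sum>i\<in>I. \<integral>\<^sup>+ x. indicator (Q i) x * g x \<partial>\<mu>) = (\<integral>\<^sup>+ x. g x \<partial>\<mu>)"
proof -
  have "(\<Sum>i\<in>I. \<integral>\<^sup>+ x. indicator (Q i) x * g x \<partial>\<mu>) = (\<integral>\<^sup>+ x. (\<Sum>i\<in>I. indicator (Q i) x * g x) \<partial>\<mu>)"
    by (rule nn_integral_sum[symmetric]) auto
  also have "\<dots> = (\<integral>\<^sup>+ x. g x \<partial>\<mu>)"
    using AE_cover by (intro nn_integral_cong_AE) (auto elim!: eventually_mono simp: sum_cells_eq)
  finally show ?thesis .
qed

lemma sum_ennreal_mass: "(\<Sum>i\<in>I. ennreal (mass i)) = 1"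
proof -
  have "(\<Sum>i\<in>I. ennreal (mass i)) = (\<Sum>i\<in>I. \<integral>\<^sup>+ x. indicator (Q i) x * 1 \<partial>\<mu>)"
    by (simp add: emeasure_Q)
  also have "\<dots> = 1" by (subst nn_integral_sum_cells) (simp_all add: mu.emeasure_space_1)
  finally show ?thesis .
qed

lemma sum_mass: "(\<Sum>i\<in>I. mass i) = 1"
  using sum_ennreal_mass by (subst (asm) sum_ennreal) (auto simp: mass_def)

lemma card_I_pos: "0 < card I"
  using sum_mass finite_I by (auto simp: card_gt_0_iff)

lemma D_nonneg: "0 \<le> D"
proof -
  obtain i where "i \<in> I" using card_I_pos by fastforce
  then obtain x where "x \<in> Q i" using measure_Q_pos[of i] by fastforce
  then show ?thesis using diameter_Q[OF \<open>i \<in> I\<close>, of x x] by simp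
qed

definition push_cell :: "'i \<Rightarrow> 'a measure" where
  "push_cell i = distr (density \<mu> (indicator (Q i))) \<nu> T"

lemma sets_push_cell: "sets (push_cell i) = sets \<nu>"
  by (simp add: push_cell_def)

lemma emeasure_push_cell:
  assumes "B \<in> sets borel"
  shows "emeasure (push_cell i) B = (\<integral>\<^sup>+ x. indicator (Q i) x * indicator B (T x) \<partial>\<mu>)"
proof -
  have [measurable]: "T -` B \<in> sets borel"
    using measurable_sets_borel[OF borel_measurable_T assms] by simp
  have "emeasure (push_cell i) B = emeasure (density \<mu> (indicator (Q i))) (T -` B)"
    unfolding push_cell_def using assms
    by (subst emeasure_distr) (auto simp: sets_nu space_mu measurable_cong_sets[OF sets_density refl])
  also have "\<dots> = (\<integral>\<^sup>+ x. indicator (Q i) x * indicator (T -` B) x \<partial>\<mu>)"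
    by (subst emeasure_density) (auto simp: sets_mu)
  finally show ?thesis by (simp add: indicator_def)
qed

lemma emeasure_push_cell_le:
  assumes "B \<in> sets borel"
  shows "emeasure (push_cell i) B \<le> emeasure \<nu> B"
proof -
  have [measurable]: "T -` B \<in> sets borel"
    using measurable_sets_borel[OF borel_measurable_T assms] by simp
  have "emeasure (push_cell i) B \<le> (\<integral>\<^sup>+ x. indicator (T -` B) x \<partial>\<mu>)"
    unfolding emeasure_push_cell[OF assms] by (intro nn_integral_mono) (auto simp: indicator_def)
  also have "\<dots> = emeasure \<nu> B"
    using assms by (subst push_forward) (simp add: emeasure_distr sets_nu space_mu sets_mu)
  finally show ?thesis .
qed

lemma absolutely_continuous_push_cell: "absolutely_continuous \<nu> (push_cell i)"
  unfolding absolutely_continuous_def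
proof
  fix B assume "B \<in> null_sets \<nu>"
  with emeasure_push_cell_le[of B i] show "B \<in> null_sets (push_cell i)"
    by (auto simp: null_sets_def sets_push_cell sets_nu)
qed

lemma nn_integral_RN_deriv_push_cell:
  assumes [measurable]: "g \<in> borel_measurable borel"
  shows "(\<integral>\<^sup>+ y. RN_deriv \<nu> (push_cell i) y * g y \<partial>\<nu>) = (\<integral>\<^sup>+ x. indicator (Q i) x * g (T x) \<partial>\<mu>)"
proof -
  have "(\<integral>\<^sup>+ y. RN_deriv \<nu> (push_cell i) y * g y \<partial>\<nu>) = integral\<^sup>N (push_cell i) g"
    by (rule nu.RN_deriv_nn_integral[OF absolutely_continuous_push_cell sets_push_cell, symmetric])
       (simp add: measurable_cong_sets[OF sets_nu refl])
  also have "\<dots> = (\<integral>\<^sup>+ x. g (T x) \<partial>density \<mu> (indicator (Q i)))"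
    unfolding push_cell_def
    by (rule nn_integral_distr) (auto simp: measurable_cong_sets[OF sets_density sets_nu])
  also have "\<dots> = (\<integral>\<^sup>+ x. indicator (Q i) x * g (T x) \<partial>\<mu>)"
    by (rule nn_integral_density) (auto simp: measurable_cong_sets[OF sets_mu refl])
  finally show ?thesis .
qed

lemma RN_deriv_push_cell_le_1: "AE y in \<nu>. RN_deriv \<nu> (push_cell i) y \<le> 1"
proof -
  define B where "B = {y. 1 < RN_deriv \<nu> (push_cell i) y}"
  have [measurable]: "B \<in> sets borel"
    unfolding B_def using borel_measurable_RN_deriv[of \<nu> "push_cell i"]
    by (simp add: measurable_cong_sets[OF sets_nu refl])
  have "AE y in \<nu>. RN_deriv \<nu> (push_cell i) y * indicator B y \<le> indicator B y"
  proof (rule ccontr)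
    assume *: "\<not> (AE y in \<nu>. RN_deriv \<nu> (push_cell i) y * indicator B y \<le> indicator B y)"
    have fin: "(\<integral>\<^sup>+ y. indicator B y \<partial>\<nu>) \<noteq> \<infinity>"
      using nu.emeasure_finite[of B] by (simp add: sets_nu)
    have "(\<integral>\<^sup>+ y. indicator B y \<partial>\<nu>) < (\<integral>\<^sup>+ y. RN_deriv \<nu> (push_cell i) y * indicator B y \<partial>\<nu>)"
      using * fin by (intro nn_integral_less)
         (auto simp: B_def indicator_def less_imp_le measurable_cong_sets[OF sets_nu refl])
    also have "\<dots> = emeasure (push_cell i) B"
      by (simp add: nn_integral_RN_deriv_push_cell emeasure_push_cell)
    also have "\<dots> \<le> emeasure \<nu> B" by (rule emeasure_push_cell_le) simp
    also have "\<dots> = (\<integral>\<^sup>+ y. indicator B y \<partial>\<nu>)" by (simp add: sets_nu)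
    finally show False by simp
  qed
  then show ?thesis
    by (rule eventually_mono) (auto simp: B_def not_less split: split_indicator_asm)
qed

text \<open>Truncating at 1 changes the Radon-Nikodym derivative only on a null set, but makes the
  bound hold everywhere.\<close>

definition cell_density :: "'i \<Rightarrow> 'a \<Rightarrow> real" where
  "cell_density i y = min 1 (enn2real (RN_deriv \<nu> (push_cell i) y))"

lemma borel_measurable_cell_density[measurable]: "cell_density i \<in> borel_measurable borel"
  using borel_measurable_RN_deriv[of \<nu> "push_cell i"]
  unfolding cell_density_def by (simp add: measurable_cong_sets[OF sets_nu refl])

lemma cell_density_nonneg: "0 \<le> cell_density i y"
  by (simp add: cell_density_def)

lemma cell_density_le_1: "cell_density i y \<le> 1"
  by (simp add: cell_density_def)

lemma nn_integral_cell_density: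
  assumes [measurable]: "g \<in> borel_measurable borel"
  shows "(\<integral>\<^sup>+ y. ennreal (cell_density i y) * g y \<partial>\<nu>) = (\<integral>\<^sup>+ x. indicator (Q i) x * g (T x) \<partial>\<mu>)"
proof -
  have truncate: "x = ennreal (min 1 (enn2real x))" if "x \<le> 1" for x :: ennreal
    using that by (cases x rule: ennreal_cases) (auto simp: min_def ennreal_le_1 top_unique)
  have "AE y in \<nu>. RN_deriv \<nu> (push_cell i) y = ennreal (cell_density i y)"
    using RN_deriv_push_cell_le_1[of i] by eventually_elim (metis truncate cell_density_def)
  then have "(\<integral>\<^sup>+ y. ennreal (cell_density i y) * g y \<partial>\<nu>) = (\<integral>\<^sup>+ y. RN_deriv \<nu> (push_cell i) y * g y \<partial>\<nu>)"
    by (intro nn_integral_cong_AE) auto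
  then show ?thesis by (simp add: nn_integral_RN_deriv_push_cell)
qed

text \<open>The block plan draws x from \<mu>, then x' from \<mu> conditioned on the cell of x, and
  outputs (x, T x').\<close>

definition block_density :: "'a \<times> 'a \<Rightarrow> real" where
  "block_density z = (\<Sum>i\<in>I. indicator (Q i) (fst z) * cell_density i (snd z) / mass i)"

definition block_plan :: "('a \<times> 'a) measure" where
  "block_plan = density (\<mu> \<Otimes>\<^sub>M \<nu>) (\<lambda>z. ennreal (block_density z))"

definition cell_pair_integral :: "'i \<Rightarrow> ('a \<Rightarrow> 'a \<Rightarrow> ennreal) \<Rightarrow> ennreal" where
  "cell_pair_integral i G = (\<integral>\<^sup>+ x. indicator (Q i) x * (\<integral>\<^sup>+ x'. indicator (Q i) x' * G x x' \<partial>\<mu>) \<partial>\<mu>)"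

lemma borel_measurable_block_density[measurable]:
  "block_density \<in> borel_measurable (borel \<Otimes>\<^sub>M borel)"
  unfolding block_density_def by measurable

lemma block_density_nonneg: "0 \<le> block_density z"
  unfolding block_density_def
  by (intro sum_nonneg) (auto simp: cell_density_nonneg mass_def)

lemma sets_block_plan: "sets block_plan = sets (borel \<Otimes>\<^sub>M borel)"
  by (simp add: block_plan_def sets_pair_mu_nu)

lemma space_block_plan: "space block_plan = UNIV"
  by (simp add: block_plan_def space_pair_measure space_mu space_nu)

lemma measurable_fst_block_plan[measurable]: "fst \<in> measurable block_plan \<mu>"
  by (simp add: measurable_cong_sets[OF sets_block_plan sets_mu])

lemma measurable_snd_block_plan[measurable]: "snd \<in> measurable block_plan \<nu>"
  by (simp add: measurable_cong_sets[OF sets_block_plan sets_nu])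

lemma nn_integral_Q_const: "(\<integral>\<^sup>+ x. indicator (Q i) x * c \<partial>\<mu>) = c * ennreal (mass i)"
  by (subst nn_integral_multc) (auto simp: emeasure_Q mult.commute sets_mu)

lemma cell_pair_integral_left:
  assumes [measurable]: "a \<in> borel_measurable borel"
  shows "cell_pair_integral i (\<lambda>x x'. a x) = ennreal (mass i) * (\<integral>\<^sup>+ x. indicator (Q i) x * a x \<partial>\<mu>)"
  unfolding cell_pair_integral_def nn_integral_Q_const
  by (subst nn_integral_cmult[symmetric]) (auto simp: mult_ac)

lemma cell_pair_integral_right:
  "cell_pair_integral i (\<lambda>x x'. b x') = ennreal (mass i) * (\<integral>\<^sup>+ x'. indicator (Q i) x' * b x' \<partial>\<mu>)"
  unfolding cell_pair_integral_def nn_integral_Q_const by (simp add: mult_ac)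

lemma inverse_mass_cancel: "i \<in> I \<Longrightarrow> ennreal (1 / mass i) * (ennreal (mass i) * X) = X"
  using mass_pos[of i] by (simp add: mult.assoc[symmetric] flip: ennreal_mult)

lemma ennreal_block_density_mult:
  "ennreal (block_density (x, y)) * g
    = (\<Sum>i\<in>I. (ennreal (1 / mass i) * indicator (Q i) x) * (ennreal (cell_density i y) * g))"
proof -
  have "ennreal (block_density (x, y)) = (\<Sum>i\<in>I. ennreal (indicator (Q i) x * cell_density i y / mass i))"
    unfolding block_density_def fst_conv snd_conv
    by (rule sum_ennreal[symmetric]) (auto simp: cell_density_nonneg mass_def)
  also have "\<dots> = (\<Sum>i\<in>I. ennreal (1 / mass i) * indicator (Q i) x * ennreal (cell_density i y))"
  proof (intro sum.cong refl)
    fix i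
    show "ennreal (indicator (Q i) x * cell_density i y / mass i)
        = ennreal (1 / mass i) * indicator (Q i) x * ennreal (cell_density i y)"
      using ennreal_mult'[of "1 / mass i" "cell_density i y"] by (auto simp: indicator_def mass_def)
  qed
  finally show ?thesis by (simp add: sum_distrib_right mult.assoc)
qed

lemma borel_measurable_cell_inner:
  assumes [measurable]: "case_prod G \<in> borel_measurable (borel \<Otimes>\<^sub>M borel)"
  shows "(\<lambda>x. \<integral>\<^sup>+ x'. indicator (Q i) x' * G x x' \<partial>\<mu>) \<in> borel_measurable borel"
  by (rule mu.borel_measurable_nn_integral, subst measurable_cong_sets[OF sets_pair_mu refl]) measurable

lemma nn_integral_block_plan:
  assumes [measurable]: "g \<in> borel_measurable (borel \<Otimes>\<^sub>M borel)"
  shows "(\<integral>\<^sup>+ z. g z \<partial>block_plan)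
    = (\<Sum>i\<in>I. ennreal (1 / mass i) * cell_pair_integral i (\<lambda>x x'. g (x, T x')))"
proof -
  have [measurable]: "(\<lambda>x. \<integral>\<^sup>+ x'. indicator (Q i) x' * g (x, T x') \<partial>\<mu>) \<in> borel_measurable \<mu>" for i
    unfolding measurable_cong_sets[OF sets_mu refl] by (rule borel_measurable_cell_inner) simp
  have "(\<integral>\<^sup>+ z. g z \<partial>block_plan) = (\<integral>\<^sup>+ z. ennreal (block_density z) * g z \<partial>(\<mu> \<Otimes>\<^sub>M \<nu>))"
    unfolding block_plan_def
    by (rule nn_integral_density) (auto simp: measurable_cong_sets[OF sets_pair_mu_nu refl])
  also have "\<dots> = (\<integral>\<^sup>+ x. \<integral>\<^sup>+ y. ennreal (block_density (x, y)) * g (x, y) \<partial>\<nu> \<partial>\<mu>)"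
    by (rule nu.nn_integral_fst[symmetric]) (auto simp: measurable_cong_sets[OF sets_pair_mu_nu refl])
  also have "\<dots> = (\<integral>\<^sup>+ x. (\<Sum>i\<in>I. (ennreal (1 / mass i) * indicator (Q i) x) *
      (\<integral>\<^sup>+ x'. indicator (Q i) x' * g (x, T x') \<partial>\<mu>)) \<partial>\<mu>)"
    unfolding ennreal_block_density_mult
    by (intro nn_integral_cong, subst nn_integral_sum)
       (simp_all add: finite_I nn_integral_cmult nn_integral_cell_density mult.assoc)
  also have "\<dots> = (\<Sum>i\<in>I. ennreal (1 / mass i) * cell_pair_integral i (\<lambda>x x'. g (x, T x')))"
    unfolding cell_pair_integral_def
    by (subst nn_integral_sum) (simp_all add: finite_I nn_integral_cmult mult.assoc)
  finally show ?thesis .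
qed

lemma distr_fst_block_plan: "distr block_plan \<mu> fst = \<mu>"
proof (rule measure_eqI)
  fix A assume "A \<in> sets (distr block_plan \<mu> fst)"
  then have A[measurable]: "A \<in> sets borel" by (simp add: sets_mu)
  have "emeasure (distr block_plan \<mu> fst) A = (\<integral>\<^sup>+ z. indicator (A \<times> UNIV) z \<partial>block_plan)"
    by (subst emeasure_distr) (auto simp: sets_mu space_block_plan vimage_fst sets_block_plan)
  also have "\<dots> = (\<Sum>i\<in>I. \<integral>\<^sup>+ x. indicator (Q i) x * indicator A x \<partial>\<mu>)"
    by (subst nn_integral_block_plan)
       (auto intro!: sum.cong simp: indicator_times cell_pair_integral_left inverse_mass_cancel)
  also have "\<dots> = emeasure \<mu> A" by (subst nn_integral_sum_cells) (simp_all add: sets_mu)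
  finally show "emeasure (distr block_plan \<mu> fst) A = emeasure \<mu> A" .
qed simp

lemma distr_snd_block_plan: "distr block_plan \<nu> snd = \<nu>"
proof (rule measure_eqI)
  fix B assume "B \<in> sets (distr block_plan \<nu> snd)"
  then have B[measurable]: "B \<in> sets borel" by (simp add: sets_nu)
  have [measurable]: "T -` B \<in> sets borel"
    using measurable_sets_borel[OF borel_measurable_T B] by simp
  have "emeasure (distr block_plan \<nu> snd) B = (\<integral>\<^sup>+ z. indicator (UNIV \<times> B) z \<partial>block_plan)"
    by (subst emeasure_distr) (auto simp: sets_nu space_block_plan vimage_snd sets_block_plan)
  also have "\<dots> = (\<Sum>i\<in>I. \<integral>\<^sup>+ x. indicator (Q i) x * indicator (T -` B) x \<partial>\<mu>)"
    by (subst nn_integral_block_plan)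
       (auto intro!: sum.cong simp: indicator_times cell_pair_integral_right inverse_mass_cancel
         indicator_vimage[symmetric])
  also have "\<dots> = emeasure \<mu> (T -` B)" by (subst nn_integral_sum_cells) (simp_all add: sets_mu)
  also have "\<dots> = emeasure \<nu> B" by (subst push_forward) (simp add: emeasure_distr sets_nu space_mu)
  finally show "emeasure (distr block_plan \<nu> snd) B = emeasure \<nu> B" .
qed simp

lemma coupling_block_plan: "coupling \<mu> \<nu> block_plan"
  unfolding coupling_def using distr_fst_block_plan distr_snd_block_plan
  by (simp add: block_plan_def)

lemma cell_pair_integral_add:
  assumes G1: "case_prod G1 \<in> borel_measurable (borel \<Otimes>\<^sub>M borel)"
    and G2: "case_prod G2 \<in> borel_measurable (borel \<Otimes>\<^sub>M borel)"
  shows "cell_pair_integral i (\<lambda>x x'. G1 x x' + G2 x x') = cell_pair_integral i G1 + cell_pair_integral i G2"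
proof -
  have [measurable]: "G1 x \<in> borel_measurable \<mu>" "G2 x \<in> borel_measurable \<mu>" for x
    using measurable_Pair2[OF G1] measurable_Pair2[OF G2]
    by (simp_all add: measurable_cong_sets[OF sets_mu refl])
  have [measurable]: "(\<lambda>x. \<integral>\<^sup>+ x'. indicator (Q i) x' * G1 x x' \<partial>\<mu>) \<in> borel_measurable \<mu>"
    "(\<lambda>x. \<integral>\<^sup>+ x'. indicator (Q i) x' * G2 x x' \<partial>\<mu>) \<in> borel_measurable \<mu>"
    using borel_measurable_cell_inner[OF G1] borel_measurable_cell_inner[OF G2]
    by (simp_all add: measurable_cong_sets[OF sets_mu refl])
  show ?thesis
    unfolding cell_pair_integral_def distrib_left
    by (simp add: nn_integral_add distrib_left)
qed

lemma cell_pair_integral_mono: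
  assumes "\<And>x x'. x \<in> K \<Longrightarrow> x' \<in> K \<Longrightarrow> x \<in> Q i \<Longrightarrow> x' \<in> Q i \<Longrightarrow> G1 x x' \<le> G2 x x'"
  shows "cell_pair_integral i G1 \<le> cell_pair_integral i G2"
  unfolding cell_pair_integral_def
proof (rule nn_integral_mono_AE)
  show "AE x in \<mu>. indicator (Q i) x * (\<integral>\<^sup>+ x'. indicator (Q i) x' * G1 x x' \<partial>\<mu>)
      \<le> indicator (Q i) x * (\<integral>\<^sup>+ x'. indicator (Q i) x' * G2 x x' \<partial>\<mu>)"
    using AE_K
  proof eventually_elim
    case (elim x)
    have "(\<integral>\<^sup>+ x'. indicator (Q i) x' * G1 x x' \<partial>\<mu>) \<le> (\<integral>\<^sup>+ x'. indicator (Q i) x' * G2 x x' \<partial>\<mu>)"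
      if "x \<in> Q i"
      using AE_K by (intro nn_integral_mono_AE) (auto elim!: eventually_mono intro!: mult_left_mono
          simp: assms elim that split: split_indicator)
    then show ?case by (auto intro: mult_left_mono split: split_indicator)
  qed
qed

lemma cell_pair_integral_bounded_neq_top:
  assumes "\<And>x. x \<in> K \<Longrightarrow> b x \<le> B"
  shows "cell_pair_integral i (\<lambda>x x'. ennreal (b x')) \<noteq> \<infinity>"
proof -
  have "(\<integral>\<^sup>+ x'. indicator (Q i) x' * ennreal (b x') \<partial>\<mu>) \<le> (\<integral>\<^sup>+ x'. ennreal B \<partial>\<mu>)"
    using AE_K
  proof (intro nn_integral_mono_AE, eventually_elim)
    case (elim x')
    then show ?case using assms[of x'] by (auto intro!: ennreal_leI split: split_indicator)
  qed
  then show ?thesis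
    unfolding cell_pair_integral_right
    by (auto simp: ennreal_mult_eq_top_iff mu.emeasure_space_1 top_unique)
qed

text \<open>The terms phi x and phi x' of quad_cost_exchange have the same integral over a cell;
  they are made nonnegative by a shift and cancelled from both sides.\<close>

lemma cell_pair_integral_quad_cost_le:
  assumes i: "i \<in> I"
  shows "cell_pair_integral i (\<lambda>x x'. ennreal (quad_cost (x, T x')))
    \<le> ennreal (mass i) * (\<integral>\<^sup>+ x. indicator (Q i) x * ennreal (quad_cost (x, T x)) \<partial>\<mu>)
      + ennreal (mass i) * (ennreal (M / 2 * D) * ennreal (mass i))"
proof -
  obtain B where B: "\<And>x. x \<in> K \<Longrightarrow> norm (phi x) \<le> B" using phi_bounded by blast
  define P where "P x = ennreal (phi x + B)" for x
  have [measurable]: "P \<in> borel_measurable borel" unfolding P_def by measurable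
  let ?I = "cell_pair_integral i"
  have finite: "?I (\<lambda>x x'. P x') \<noteq> \<infinity>"
    unfolding P_def using B by (intro cell_pair_integral_bounded_neq_top[of _ "2 * B"]) force
  have "?I (\<lambda>x x'. ennreal (quad_cost (x, T x'))) + ?I (\<lambda>x x'. P x')
      = ?I (\<lambda>x x'. ennreal (quad_cost (x, T x')) + P x')"
    by (rule cell_pair_integral_add[symmetric]) measurable
  also have "\<dots> \<le> ?I (\<lambda>x x'. (ennreal (quad_cost (x', T x')) + ennreal (M / 2 * D)) + P x)"
  proof (rule cell_pair_integral_mono)
    fix x x' assume x: "x \<in> K" "x' \<in> K" "x \<in> Q i" "x' \<in> Q i"
    have "M / 2 * (norm (x - x'))\<^sup>2 \<le> M / 2 * D"
      using diameter_Q[OF i x(3,4)] M_nonneg by (intro mult_left_mono) auto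
    then have "quad_cost (x, T x') + (phi x' + B) \<le> (quad_cost (x', T x') + M / 2 * D) + (phi x + B)"
      using quad_cost_exchange[of x x'] by simp
    then have "ennreal (quad_cost (x, T x') + (phi x' + B))
        \<le> ennreal ((quad_cost (x', T x') + M / 2 * D) + (phi x + B))"
      by (rule ennreal_leI)
    moreover have "0 \<le> phi x + B" "0 \<le> phi x' + B" "0 \<le> M / 2 * D"
      using B[OF x(1)] B[OF x(2)] M_nonneg D_nonneg by auto
    ultimately show "ennreal (quad_cost (x, T x')) + P x'
        \<le> (ennreal (quad_cost (x', T x')) + ennreal (M / 2 * D)) + P x"
      unfolding P_def by (simp add: quad_cost_nonneg ennreal_plus)
  qed
  also have "\<dots> = ?I (\<lambda>x x'. ennreal (quad_cost (x', T x'))) + ?I (\<lambda>x x'. ennreal (M / 2 * D))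
      + ?I (\<lambda>x x'. P x)"
    by (subst cell_pair_integral_add, measurable, subst cell_pair_integral_add, measurable)
  also have "?I (\<lambda>x x'. P x) = ?I (\<lambda>x x'. P x')"
    by (simp add: cell_pair_integral_left cell_pair_integral_right)
  finally have "?I (\<lambda>x x'. ennreal (quad_cost (x, T x')))
      \<le> ?I (\<lambda>x x'. ennreal (quad_cost (x', T x'))) + ?I (\<lambda>x x'. ennreal (M / 2 * D))"
    using finite by (simp add: ennreal_add_left_cancel_le add.commute[of _ "?I (\<lambda>x x'. P x')"] add.assoc)
  then show ?thesis
    by (simp add: cell_pair_integral_left cell_pair_integral_right nn_integral_Q_const)
qed

lemma integral_quad_cost_block_plan_le:
  "(\<integral>z. quad_cost z \<partial>block_plan) \<le> (\<integral>x. quad_cost (x, T x) \<partial>\<mu>) + M / 2 * D"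
proof -
  have [measurable]: "(\<lambda>x. quad_cost (x, T x)) \<in> borel_measurable borel" by measurable
  have "(\<integral>\<^sup>+ z. ennreal (quad_cost z) \<partial>block_plan)
      = (\<Sum>i\<in>I. ennreal (1 / mass i) * cell_pair_integral i (\<lambda>x x'. ennreal (quad_cost (x, T x'))))"
    by (rule nn_integral_block_plan) measurable
  also have "\<dots> \<le> (\<Sum>i\<in>I. (\<integral>\<^sup>+ x. indicator (Q i) x * ennreal (quad_cost (x, T x)) \<partial>\<mu>)
      + ennreal (M / 2 * D) * ennreal (mass i))"
    by (intro sum_mono order.trans[OF mult_left_mono[OF cell_pair_integral_quad_cost_le]])
       (simp_all add: distrib_left inverse_mass_cancel)
  also have "\<dots> = (\<integral>\<^sup>+ x. ennreal (quad_cost (x, T x)) \<partial>\<mu>) + ennreal (M / 2 * D)"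
    by (simp add: sum.distrib nn_integral_sum_cells sum_ennreal_mass flip: sum_distrib_left)
  finally have "(\<integral>\<^sup>+ z. ennreal (quad_cost z) \<partial>block_plan)
      \<le> (\<integral>\<^sup>+ x. ennreal (quad_cost (x, T x)) \<partial>\<mu>) + ennreal (M / 2 * D)" .
  moreover have "integrable \<mu> (\<lambda>x. quad_cost (x, T x))"
    by (rule integrable_mu_continuous_on_K)
       (auto simp: quad_cost_def intro!: continuous_intros continuous_on_subset[OF continuous_T])
  ultimately show ?thesis
    using integrable_quad_cost_coupling[OF coupling_block_plan] M_nonneg D_nonneg
    by (simp add: nn_integral_eq_integral quad_cost_nonneg integral_nonneg_AE ennreal_plus[symmetric]
        ennreal_le_iff del: ennreal_plus)
qed

definition cell_surprisal :: "'a \<Rightarrow> real" where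
  "cell_surprisal x = (\<Sum>i\<in>I. indicator (Q i) x * ln (1 / mass i))"

lemma borel_measurable_cell_surprisal[measurable]: "cell_surprisal \<in> borel_measurable borel"
  unfolding cell_surprisal_def by measurable

lemma ln_inverse_mass_nonneg: "i \<in> I \<Longrightarrow> 0 \<le> ln (1 / mass i)"
  using mass_pos[of i] mass_le_1[of i] by simp

lemma cell_surprisal_nonneg: "0 \<le> cell_surprisal x"
  unfolding cell_surprisal_def by (intro sum_nonneg) (simp add: ln_inverse_mass_nonneg)

lemma block_density_ln_le: "block_density z * ln (block_density z) \<le> block_density z * cell_surprisal (fst z)"
proof (cases "\<exists>i\<in>I. fst z \<in> Q i")
  case True
  then obtain i where i: "i \<in> I" "fst z \<in> Q i" by blast
  have "block_density z = cell_density i (snd z) / mass i"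
    unfolding block_density_def using sum_cells_eq[OF i, of "\<lambda>i. cell_density i (snd z) / mass i"]
    by simp
  moreover have "cell_surprisal (fst z) = ln (1 / mass i)"
    unfolding cell_surprisal_def using sum_cells_eq[OF i, of "\<lambda>i. ln (1 / mass i)"] by simp
  moreover have "cell_density i (snd z) / mass i \<le> 1 / mass i"
    using mass_pos[OF i(1)] cell_density_le_1 by (intro divide_right_mono) auto
  ultimately show ?thesis
    using mass_pos[OF i(1)] cell_density_nonneg[of i "snd z"]
    by (simp only:) (rule mult_ln_le_mult_ln, simp_all)
next
  case False
  then have "block_density z = 0" unfolding block_density_def by (intro sum.neutral) auto
  then show ?thesis by simp
qed

lemma nn_integral_cell_surprisal_block_plan:
  "(\<integral>\<^sup>+ z. ennreal (cell_surprisal (fst z)) \<partial>block_plan) = (\<Sum>i\<in>I. ennreal (mass i * ln (1 / mass i)))"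
proof (subst nn_integral_block_plan, measurable, intro sum.cong refl)
  fix i assume i: "i \<in> I"
  have "(\<integral>\<^sup>+ x. indicator (Q i) x * ennreal (cell_surprisal x) \<partial>\<mu>)
      = (\<integral>\<^sup>+ x. indicator (Q i) x * ennreal (ln (1 / mass i)) \<partial>\<mu>)"
    unfolding cell_surprisal_def using sum_cells_eq[OF i, of _ "\<lambda>i. ln (1 / mass i)"]
    by (intro nn_integral_cong) (simp split: split_indicator)
  then show "ennreal (1 / mass i) * cell_pair_integral i (\<lambda>x x'. ennreal (cell_surprisal (fst (x, T x'))))
      = ennreal (mass i * ln (1 / mass i))"
    using mass_pos[OF i] ln_inverse_mass_nonneg[OF i]
    by (simp add: cell_pair_integral_left inverse_mass_cancel[OF i] nn_integral_Q_const ennreal_mult'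
        mult.commute)
qed

lemma rel_ent_block_plan_le: "rel_ent block_plan (\<mu> \<Otimes>\<^sub>M \<nu>) \<le> ln (card I)"
proof -
  have "rel_ent block_plan (\<mu> \<Otimes>\<^sub>M \<nu>)
      \<le> enn2ereal (\<integral>\<^sup>+ z. ennreal (block_density z * ln (block_density z)) \<partial>(\<mu> \<Otimes>\<^sub>M \<nu>))"
    unfolding block_plan_def
    by (rule rel_ent_density_le)
       (auto simp: block_density_nonneg measurable_cong_sets[OF sets_pair_mu_nu refl]
         mu_nu.P.sigma_finite_measure_axioms)
  also have "(\<integral>\<^sup>+ z. ennreal (block_density z * ln (block_density z)) \<partial>(\<mu> \<Otimes>\<^sub>M \<nu>))
      \<le> (\<integral>\<^sup>+ z. ennreal (block_density z) * ennreal (cell_surprisal (fst z)) \<partial>(\<mu> \<Otimes>\<^sub>M \<nu>))"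
    using block_density_ln_le block_density_nonneg cell_surprisal_nonneg
    by (intro nn_integral_mono) (simp add: ennreal_leI flip: ennreal_mult)
  also have "\<dots> = (\<integral>\<^sup>+ z. ennreal (cell_surprisal (fst z)) \<partial>block_plan)"
    unfolding block_plan_def
    by (rule nn_integral_density[symmetric]) (auto simp: measurable_cong_sets[OF sets_pair_mu_nu refl])
  also have "\<dots> = (\<Sum>i\<in>I. ennreal (mass i * ln (1 / mass i)))"
    by (rule nn_integral_cell_surprisal_block_plan)
  also have "\<dots> = ennreal (\<Sum>i\<in>I. mass i * ln (1 / mass i))"
    by (intro sum_ennreal) (meson less_imp_le mass_pos ln_inverse_mass_nonneg mult_nonneg_nonneg)
  also have "enn2ereal \<dots> \<le> ln (card I)"
    using entropy_le_ln_card[OF finite_I mass_pos sum_mass] mass_pos ln_inverse_mass_nonneg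
    by (simp add: sum_nonneg less_imp_le)
  finally show ?thesis by (simp add: less_eq_ennreal.rep_eq)
qed

lemma entropic_plan_deviation_le:
  assumes opt: "optimal_entropic_plan \<mu> \<nu> \<epsilon> \<gamma>" and \<epsilon>: "0 < \<epsilon>"
  shows "(\<integral>(x, y). (norm (y - T x))\<^sup>2 \<partial>\<gamma>) \<le> 2 * M * (M / 2 * D + \<epsilon> * ln (card I))"
proof -
  have coupling: "coupling \<mu> \<nu> \<gamma>" using opt by (simp add: optimal_entropic_plan_def)
  have "0 \<le> ereal \<epsilon> * rel_ent \<gamma> (\<mu> \<Otimes>\<^sub>M \<nu>)"
    using \<epsilon> rel_ent_nonneg[OF prob_space_coupling[OF coupling] mu_nu.P.prob_space_axioms]
    by (cases "rel_ent \<gamma> (\<mu> \<Otimes>\<^sub>M \<nu>)") auto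
  then have "ereal (\<integral>z. quad_cost z \<partial>\<gamma>) \<le> entropic_functional \<mu> \<nu> \<epsilon> \<gamma>"
    by (simp add: entropic_functional_def add_increasing2)
  also have "\<dots> \<le> entropic_functional \<mu> \<nu> \<epsilon> block_plan"
    using opt coupling_block_plan by (simp add: optimal_entropic_plan_def)
  also have "\<dots> \<le> ereal (\<integral>z. quad_cost z \<partial>block_plan) + ereal \<epsilon> * ereal (ln (card I))"
    unfolding entropic_functional_def using \<epsilon>
    by (intro add_left_mono ereal_mult_left_mono rel_ent_block_plan_le) simp
  finally have "(\<integral>z. quad_cost z \<partial>\<gamma>) - (\<integral>x. quad_cost (x, T x) \<partial>\<mu>) \<le> M / 2 * D + \<epsilon> * ln (card I)"
    using integral_quad_cost_block_plan_le by simp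
  with M_nonneg coupling_deviation_le_cost_excess[OF coupling] show ?thesis
    by (meson mult_left_mono order_trans zero_le_mult_iff zero_le_numeral)
qed

end

section \<open>Grid cubes\<close>

lemma power2_norm_eq_sum_Basis: "(norm x)\<^sup>2 = (\<Sum>i\<in>Basis. (x \<bullet> i)\<^sup>2)"
  by (subst power2_norm_eq_inner, subst euclidean_inner) (simp add: power2_eq_square)

definition cube :: "real \<Rightarrow> ('a::euclidean_space \<Rightarrow> int) \<Rightarrow> 'a set" where
  "cube \<delta> \<kappa> = {x. \<forall>i\<in>Basis. \<lfloor>(x \<bullet> i) / \<delta>\<rfloor> = \<kappa> i}"

definition cube_indices :: "int \<Rightarrow> ('a::euclidean_space \<Rightarrow> int) set" where
  "cube_indices m = PiE Basis (\<lambda>_. {-m..m})"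

lemma sets_cube[measurable]: "cube \<delta> \<kappa> \<in> sets borel"
  unfolding cube_def by measurable

lemma finite_cube_indices: "finite (cube_indices m)"
  unfolding cube_indices_def by (intro finite_PiE) auto

lemma card_cube_indices: "card (cube_indices m :: ('a::euclidean_space \<Rightarrow> int) set) = nat (2 * m + 1) ^ DIM('a)"
  unfolding cube_indices_def by (simp add: card_PiE)

lemma disjoint_cubes:
  assumes "\<kappa> \<in> cube_indices m" "\<kappa>' \<in> cube_indices m" "\<kappa> \<noteq> \<kappa>'"
  shows "cube \<delta> \<kappa> \<inter> cube \<delta> \<kappa>' = {}"
proof -
  from assms obtain i where "i \<in> Basis" "\<kappa> i \<noteq> \<kappa>' i"
    unfolding cube_indices_def by (metis PiE_ext)
  then show ?thesis unfolding cube_def by auto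
qed

lemma cube_diameter:
  fixes x :: "'a::euclidean_space"
  assumes "x \<in> cube \<delta> \<kappa>" "x' \<in> cube \<delta> \<kappa>" "0 < \<delta>"
  shows "(norm (x - x'))\<^sup>2 \<le> real DIM('a) * \<delta>\<^sup>2"
proof -
  have "((x - x') \<bullet> i)\<^sup>2 \<le> \<delta>\<^sup>2" if i: "i \<in> Basis" for i
  proof -
    have "\<lfloor>(x \<bullet> i) / \<delta>\<rfloor> = \<lfloor>(x' \<bullet> i) / \<delta>\<rfloor>" using assms(1,2) i unfolding cube_def by auto
    then have "\<bar>(x \<bullet> i) / \<delta> - (x' \<bullet> i) / \<delta>\<bar> < 1" by linarith
    then have "\<bar>(x - x') \<bullet> i\<bar> \<le> \<bar>\<delta>\<bar>"
      using assms(3) by (simp add: inner_diff_left abs_divide divide_less_eq flip: diff_divide_distrib)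
    then show ?thesis by (simp add: abs_le_square_iff)
  qed
  then have "(\<Sum>i\<in>Basis. ((x - x') \<bullet> i)\<^sup>2) \<le> (\<Sum>i\<in>(Basis::'a set). \<delta>\<^sup>2)" by (rule sum_mono)
  then show ?thesis by (simp add: power2_norm_eq_sum_Basis)
qed

lemma cube_index_of_point:
  fixes x :: "'a::euclidean_space"
  assumes "norm x \<le> m * \<delta>" "0 < \<delta>"
  defines "\<kappa> \<equiv> restrict (\<lambda>i. \<lfloor>(x \<bullet> i) / \<delta>\<rfloor>) Basis"
  shows "x \<in> cube \<delta> \<kappa>" and "\<kappa> \<in> cube_indices m"
proof -
  show "x \<in> cube \<delta> \<kappa>" unfolding cube_def \<kappa>_def by simp
  have "\<lfloor>(x \<bullet> i) / \<delta>\<rfloor> \<in> {-m..m}" if i: "i \<in> Basis" for i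
  proof -
    have "\<bar>x \<bullet> i\<bar> \<le> m * \<delta>" using Basis_le_norm[OF i, of x] assms(1) by linarith
    then have "-m \<le> (x \<bullet> i) / \<delta>" "(x \<bullet> i) / \<delta> \<le> m"
      using assms(2) by (simp_all add: abs_le_iff le_divide_eq divide_le_eq)
    then show ?thesis by (auto simp: le_floor_iff floor_le_iff)
  qed
  then show "\<kappa> \<in> cube_indices m" unfolding cube_indices_def \<kappa>_def by auto
qed

lemma ln_card_subset_cube_indices_le:
  fixes R \<epsilon> :: real and J :: "('a::euclidean_space \<Rightarrow> int) set"
  assumes R: "0 < R" and \<epsilon>: "0 < \<epsilon>" "\<epsilon> < 1"
    and J: "J \<subseteq> cube_indices \<lceil>R / sqrt \<epsilon>\<rceil>" "J \<noteq> {}"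
  shows "ln (card J) \<le> DIM('a) * (ln (2 * R + 3) + ln (1 / \<epsilon>) / 2)"
proof -
  define \<delta> where "\<delta> = sqrt \<epsilon>"
  define m where "m = \<lceil>R / \<delta>\<rceil>"
  have \<delta>: "0 < \<delta>" "\<delta> \<le> 1" using \<epsilon> by (auto simp: \<delta>_def real_sqrt_le_1_iff)
  have "0 < R / \<delta>" using R \<delta> by simp
  then have m: "0 \<le> m" "m < R / \<delta> + 1" unfolding m_def by linarith+
  have "card J \<le> card (cube_indices m :: ('a \<Rightarrow> int) set)"
    using J by (intro card_mono finite_cube_indices) (simp add: m_def \<delta>_def)
  then have "real (card J) \<le> real (nat (2 * m + 1) ^ DIM('a))"
    by (simp add: card_cube_indices)
  also have "\<dots> = (real_of_int (2 * m + 1)) ^ DIM('a)"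
    using m(1) by simp
  finally have "real (card J) \<le> (real_of_int (2 * m + 1)) ^ DIM('a)" .
  moreover have "0 < card J" using J finite_subset[OF J(1) finite_cube_indices] by fastforce
  ultimately have "ln (card J) \<le> ln ((real_of_int (2 * m + 1)) ^ DIM('a))"
    by (intro ln_mono) auto
  also have "\<dots> = DIM('a) * ln (real_of_int (2 * m + 1))"
    using m(1) by (simp add: ln_realpow)
  also have "\<dots> \<le> DIM('a) * ln ((2 * R + 3) / \<delta>)"
  proof (intro mult_left_mono ln_mono)
    have "3 \<le> 3 / \<delta>" using \<delta> by (simp add: field_simps)
    then show "real_of_int (2 * m + 1) \<le> (2 * R + 3) / \<delta>"
      using m by (simp add: add_divide_distrib)
  qed (use m in auto)
  also have "ln ((2 * R + 3) / \<delta>) = ln (2 * R + 3) + ln (1 / \<epsilon>) / 2"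
    using \<delta> R \<epsilon> by (simp add: ln_div \<delta>_def ln_sqrt)
  finally show ?thesis .
qed

context lipschitz_brenier_map
begin

definition charged_cubes :: "real \<Rightarrow> int \<Rightarrow> ('a \<Rightarrow> int) set" where
  "charged_cubes \<delta> m = {\<kappa> \<in> cube_indices m. 0 < measure \<mu> (cube \<delta> \<kappa>)}"

lemma block_partition_cubes:
  assumes \<delta>: "0 < \<delta>" and K: "\<And>x. x \<in> K \<Longrightarrow> norm x \<le> m * \<delta>"
  shows "block_partition \<mu> \<nu> f T M K (charged_cubes \<delta> m) (cube \<delta>) (real DIM('a) * \<delta>\<^sup>2)"
proof (intro block_partition.intro block_partition_axioms.intro lipschitz_brenier_map_axioms)
  show "finite (charged_cubes \<delta> m)"
    unfolding charged_cubes_def by (rule finite_subset[OF _ finite_cube_indices]) auto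
  show "cube \<delta> \<kappa> \<in> sets borel" for \<kappa> by simp
  show "cube \<delta> \<kappa> \<inter> cube \<delta> \<kappa>' = {}"
    if "\<kappa> \<in> charged_cubes \<delta> m" "\<kappa>' \<in> charged_cubes \<delta> m" "\<kappa> \<noteq> \<kappa>'" for \<kappa> \<kappa>'
    using that by (intro disjoint_cubes) (auto simp: charged_cubes_def)
  show "0 < measure \<mu> (cube \<delta> \<kappa>)" if "\<kappa> \<in> charged_cubes \<delta> m" for \<kappa>
    using that by (simp add: charged_cubes_def)
  show "(norm (x - x'))\<^sup>2 \<le> real DIM('a) * \<delta>\<^sup>2" if "x \<in> cube \<delta> \<kappa>" "x' \<in> cube \<delta> \<kappa>" for \<kappa> and x x' :: 'a
    using that \<delta> by (rule cube_diameter)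
  have "(\<Union>\<kappa>\<in>cube_indices m - charged_cubes \<delta> m. cube \<delta> \<kappa>) \<in> null_sets \<mu>"
    using finite_cube_indices[of m]
    by (intro null_sets_UN') (auto intro: countable_finite simp: charged_cubes_def
        mu.emeasure_eq_measure null_sets_def sets_mu not_less measure_le_0_iff)
  then have "AE x in \<mu>. x \<notin> (\<Union>\<kappa>\<in>cube_indices m - charged_cubes \<delta> m. cube \<delta> \<kappa>)"
    by (rule AE_not_in)
  then show "AE x in \<mu>. \<exists>\<kappa>\<in>charged_cubes \<delta> m. x \<in> cube \<delta> \<kappa>"
    using AE_K
  proof eventually_elim
    case (elim x)
    then show ?case using cube_index_of_point[OF K \<delta>, of x] by blast
  qed
qed

lemma entropic_plan_deviation_asymptotics:
  obtains C where "\<And>\<epsilon> \<gamma>. 0 < \<epsilon> \<Longrightarrow> \<epsilon> < 1 \<Longrightarrow> optimal_entropic_plan \<mu> \<nu> \<epsilon> \<gamma> \<Longrightarrow>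
    (\<integral>(x, y). (norm (y - T x))\<^sup>2 \<partial>\<gamma>) \<le> M * (real DIM('a) * \<epsilon> * ln (1 / \<epsilon>) + C * \<epsilon>)"
proof -
  obtain R where R: "0 < R" "\<And>x. x \<in> K \<Longrightarrow> norm x \<le> R"
    using compact_imp_bounded[OF compact_K] by (auto simp: bounded_pos)
  define C where "C = M * DIM('a) + 2 * DIM('a) * ln (2 * R + 3)"
  have "(\<integral>(x, y). (norm (y - T x))\<^sup>2 \<partial>\<gamma>) \<le> M * (real DIM('a) * \<epsilon> * ln (1 / \<epsilon>) + C * \<epsilon>)"
    if \<epsilon>: "0 < \<epsilon>" "\<epsilon> < 1" and opt: "optimal_entropic_plan \<mu> \<nu> \<epsilon> \<gamma>" for \<epsilon> \<gamma>
  proof -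
    define \<delta> where "\<delta> = sqrt \<epsilon>"
    define m where "m = \<lceil>R / \<delta>\<rceil>"
    have \<delta>: "0 < \<delta>" "\<delta>\<^sup>2 = \<epsilon>" using \<epsilon> by (auto simp: \<delta>_def)
    have K: "norm x \<le> m * \<delta>" if "x \<in> K" for x
    proof -
      have "norm x \<le> (R / \<delta>) * \<delta>" using R(2)[OF that] \<delta> by simp
      also have "\<dots> \<le> m * \<delta>" unfolding m_def using \<delta> by (intro mult_right_mono) auto
      finally show ?thesis .
    qed
    interpret cubes: block_partition \<mu> \<nu> f T M K "charged_cubes \<delta> m" "cube \<delta>" "real DIM('a) * \<delta>\<^sup>2"
      using \<delta>(1) K by (rule block_partition_cubes)
    have "charged_cubes \<delta> m \<noteq> {}" using cubes.card_I_pos by auto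
    then have "ln (card (charged_cubes \<delta> m)) \<le> DIM('a) * (ln (2 * R + 3) + ln (1 / \<epsilon>) / 2)"
      by (intro ln_card_subset_cube_indices_le[OF R(1) \<epsilon>]) (auto simp: charged_cubes_def m_def \<delta>_def)
    then have ln_card: "\<epsilon> * ln (card (charged_cubes \<delta> m))
        \<le> \<epsilon> * (DIM('a) * (ln (2 * R + 3) + ln (1 / \<epsilon>) / 2))"
      using \<epsilon> by (simp add: mult_left_mono)
    have "(\<integral>(x, y). (norm (y - T x))\<^sup>2 \<partial>\<gamma>)
        \<le> 2 * M * (M / 2 * (real DIM('a) * \<delta>\<^sup>2) + \<epsilon> * ln (card (charged_cubes \<delta> m)))"
      by (rule cubes.entropic_plan_deviation_le[OF opt \<epsilon>(1)])
    also have "\<dots> \<le> 2 * M * (M / 2 * (real DIM('a) * \<epsilon>) + \<epsilon> * (DIM('a) * (ln (2 * R + 3) + ln (1 / \<epsilon>) / 2)))"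
      using ln_card \<delta>(2) M_nonneg by (intro mult_left_mono) auto
    also have "\<dots> = M * (real DIM('a) * \<epsilon> * ln (1 / \<epsilon>) + C * \<epsilon>)"
      by (simp add: C_def algebra_simps)
    finally show ?thesis .
  qed
  then show thesis by (rule that)
qed

end

section \<open>Barycentric projections\<close>

lemma (in finite_measure) integrable_mult_bounded:
  fixes U W :: "'a \<Rightarrow> real"
  assumes [measurable]: "U \<in> borel_measurable M" "W \<in> borel_measurable M"
    and bound: "AE x in M. \<bar>U x\<bar> \<le> C \<and> \<bar>W x\<bar> \<le> C"
  shows "integrable M (\<lambda>x. U x * W x)"
proof (rule integrable_const_bound[of _ "C * C"])
  show "AE x in M. norm (U x * W x) \<le> C * C"
    using bound by eventually_elim (metis abs_ge_zero abs_mult mult_mono' real_norm_def)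
qed measurable

text \<open>Y - G is orthogonal to the F-measurable function G - Z.\<close>

lemma real_cond_exp_sq_dist_le:
  assumes sub: "sigma_finite_subalgebra M F" and fin: "finite_measure M"
    and [measurable]: "Y \<in> borel_measurable M" and Y: "AE x in M. \<bar>Y x\<bar> \<le> B"
    and Z_meas: "Z \<in> borel_measurable F" and Z: "AE x in M. \<bar>Z x\<bar> \<le> B"
    and G_meas: "G \<in> borel_measurable F" and G_eq: "AE x in M. real_cond_exp M F Y x = G x"
  shows "integrable M (\<lambda>x. (G x - Z x)\<^sup>2) \<and> (\<integral>x. (G x - Z x)\<^sup>2 \<partial>M) \<le> (\<integral>x. (Y x - Z x)\<^sup>2 \<partial>M)"
proof -
  interpret sigma_finite_subalgebra M F by (rule sub)
  interpret finite_measure M by (rule fin)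
  have [measurable]: "Z \<in> borel_measurable M" "G \<in> borel_measurable M"
    using measurable_from_subalg[OF subalg] Z_meas G_meas by auto
  have integrable_Y: "integrable M Y" by (rule integrable_const_bound[of _ B]) (use Y in auto)
  have "AE x in M. real_cond_exp M F Y x \<le> B" "AE x in M. - B \<le> real_cond_exp M F Y x"
    by (intro real_cond_exp_le_c real_cond_exp_ge_c integrable_Y; use Y in auto)+
  then have bounds: "AE x in M. \<bar>G x - Z x\<bar> \<le> 2 * B \<and> \<bar>Y x - G x\<bar> \<le> 2 * B \<and>
      \<bar>Y x\<bar> \<le> 2 * B \<and> \<bar>G x\<bar> \<le> 2 * B"
    using Y Z G_eq by eventually_elim (auto simp: abs_le_iff)
  note integrable_prod = integrable_mult_bounded[where C = "2 * B"]
  have int_GZ: "integrable M (\<lambda>x. (G x - Z x)\<^sup>2)"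
    using bounds by (simp add: power2_eq_square integrable_prod)
  have int_YG: "integrable M (\<lambda>x. (Y x - G x)\<^sup>2)"
    using bounds by (simp add: power2_eq_square integrable_prod)
  have int_cross: "integrable M (\<lambda>x. (G x - Z x) * (Y x - G x))"
    using bounds by (simp add: integrable_prod)
  have "(\<integral>x. (G x - Z x) * Y x \<partial>M) = (\<integral>x. (G x - Z x) * real_cond_exp M F Y x \<partial>M)"
    using bounds Z_meas G_meas by (intro real_cond_exp_intg(2)[symmetric] integrable_prod) auto
  also have "\<dots> = (\<integral>x. (G x - Z x) * G x \<partial>M)"
    using G_eq by (intro integral_cong_AE) auto
  finally have orthogonal: "(\<integral>x. (G x - Z x) * (Y x - G x) \<partial>M) = 0"
    using bounds by (simp add: right_diff_distrib integrable_prod)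
  have "(\<integral>x. (Y x - Z x)\<^sup>2 \<partial>M)
      = (\<integral>x. (G x - Z x)\<^sup>2 + (Y x - G x)\<^sup>2 + 2 * ((G x - Z x) * (Y x - G x)) \<partial>M)"
    by (intro Bochner_Integration.integral_cong) (auto simp: power2_eq_square algebra_simps)
  also have "\<dots> = (\<integral>x. (G x - Z x)\<^sup>2 \<partial>M) + (\<integral>x. (Y x - G x)\<^sup>2 \<partial>M)"
    using int_GZ int_YG int_cross orthogonal by simp
  also have "\<dots> \<ge> (\<integral>x. (G x - Z x)\<^sup>2 \<partial>M)" by simp
  finally show ?thesis using int_GZ by simp
qed

context lipschitz_brenier_map
begin

context
  fixes \<gamma> :: "('a \<times> 'a) measure"
  assumes coupling: "coupling \<mu> \<nu> \<gamma>"
begin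

lemma sigma_finite_subalgebra_fst_coupling:
  "sigma_finite_subalgebra \<gamma> (vimage_algebra (space \<gamma>) fst \<mu>)"
proof (rule finite_measure_subalgebra_is_sigma_finite)
  have "subalgebra \<gamma> (vimage_algebra (space \<gamma>) fst \<mu>)"
    using measurable_fst_coupling[OF coupling]
    by (auto simp: subalgebra_def sets_vimage_algebra2 measurable_sets measurable_space)
  then show "finite_measure_subalgebra \<gamma> (vimage_algebra (space \<gamma>) fst \<mu>)"
    using prob_space_coupling[OF coupling]
    by (simp add: finite_measure_subalgebra_def finite_measure_subalgebra_axioms_def prob_space_def)
qed

lemma measurable_fst_vimage_algebra: "fst \<in> measurable (vimage_algebra (space \<gamma>) fst \<mu>) \<mu>"
  using measurable_space[OF measurable_fst_coupling[OF coupling]]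
  by (intro measurable_vimage_algebra1) auto

lemma real_cond_exp_snd_barycentric_projection:
  assumes bp: "barycentric_projection \<gamma> \<mu> Tb" and i: "i \<in> Basis"
  shows "AE z in \<gamma>. real_cond_exp \<gamma> (vimage_algebra (space \<gamma>) fst \<mu>) (\<lambda>z. snd z \<bullet> i) z = Tb (fst z) \<bullet> i"
proof -
  interpret sigma_finite_subalgebra \<gamma> "vimage_algebra (space \<gamma>) fst \<mu>"
    by (rule sigma_finite_subalgebra_fst_coupling)
  interpret gamma: prob_space \<gamma> by (rule prob_space_coupling[OF coupling])
  have [measurable]: "Tb \<in> borel_measurable borel"
    using bp by (simp add: barycentric_projection_def measurable_cong_sets[OF sets_mu refl])
  have integrable_Tb: "integrable \<mu> Tb" using bp by (simp add: barycentric_projection_def)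
  obtain R where R: "0 < R" "\<And>y. y \<in> T ` K \<Longrightarrow> norm y \<le> R"
    using compact_imp_bounded[OF compact_T_K] by (auto simp: bounded_pos)
  have integrable_snd: "integrable \<gamma> (\<lambda>z. indicator B (fst z) *\<^sub>R snd z)" if "B \<in> sets borel" for B
    using that R by (intro integrable_coupling_bounded[OF coupling, of _ R]) (auto simp: indicator_def)
  show ?thesis
  proof (rule real_cond_exp_charact)
    show "integrable \<gamma> (\<lambda>z. snd z \<bullet> i)"
      using integrable_snd[of UNIV] by (simp add: integrable_inner_left)
    show "integrable \<gamma> (\<lambda>z. Tb (fst z) \<bullet> i)"
      using integrable_Tb distr_fst_coupling[OF coupling] measurable_fst_coupling[OF coupling]
      by (subst integrable_distr_eq[symmetric]) (auto simp: integrable_inner_left)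
    show "(\<lambda>z. Tb (fst z) \<bullet> i) \<in> borel_measurable (vimage_algebra (space \<gamma>) fst \<mu>)"
      by (rule measurable_compose[OF measurable_fst_vimage_algebra])
         (simp add: measurable_cong_sets[OF sets_mu refl])
    fix A assume "A \<in> sets (vimage_algebra (space \<gamma>) fst \<mu>)"
    then obtain B where B: "B \<in> sets borel" "A = fst -` B \<inter> space \<gamma>"
      using measurable_space[OF measurable_fst_coupling[OF coupling]]
      by (auto simp: sets_vimage_algebra2 sets_mu)
    have "(\<integral>z \<in> A. snd z \<bullet> i \<partial>\<gamma>) = (\<integral>z. indicator B (fst z) *\<^sub>R snd z \<partial>\<gamma>) \<bullet> i"
      unfolding set_lebesgue_integral_def B(2) integral_inner_left[OF integrable_snd[OF B(1)], symmetric]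
      by (intro Bochner_Integration.integral_cong) (auto simp: indicator_def)
    also have "\<dots> = (\<integral>x. indicator B x *\<^sub>R Tb x \<partial>\<mu>) \<bullet> i"
      using bp B(1) by (simp add: barycentric_projection_def case_prod_beta' sets_mu)
    also have "\<dots> = (\<integral>z. indicator B (fst z) * (Tb (fst z) \<bullet> i) \<partial>\<gamma>)"
      using integrable_mult_indicator[of B \<mu> Tb] integrable_Tb B(1) distr_fst_coupling[OF coupling]
      by (subst integral_inner_left[symmetric], simp add: sets_mu,
          subst integral_distr[symmetric, OF measurable_fst_coupling[OF coupling]]) auto
    also have "\<dots> = (\<integral>z \<in> A. Tb (fst z) \<bullet> i \<partial>\<gamma>)"
      unfolding set_lebesgue_integral_def B(2)
      by (intro Bochner_Integration.integral_cong) (auto simp: indicator_def)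
    finally show "(\<integral>z \<in> A. snd z \<bullet> i \<partial>\<gamma>) = (\<integral>z \<in> A. Tb (fst z) \<bullet> i \<partial>\<gamma>)" .
  qed
qed

lemma barycentric_projection_deviation_le:
  assumes bp: "barycentric_projection \<gamma> \<mu> Tb"
  shows "(\<integral>x. (norm (Tb x - T x))\<^sup>2 \<partial>\<mu>) \<le> (\<integral>(x, y). (norm (y - T x))\<^sup>2 \<partial>\<gamma>)"
proof -
  let ?F = "vimage_algebra (space \<gamma>) fst \<mu>"
  have [measurable]: "Tb \<in> borel_measurable borel"
    using bp by (simp add: barycentric_projection_def measurable_cong_sets[OF sets_mu refl])
  obtain R where R: "\<And>y. y \<in> T ` K \<Longrightarrow> norm y \<le> R"
    using compact_imp_bounded[OF compact_T_K] by (auto simp: bounded_iff)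
  have measurable_F: "(\<lambda>z. g (fst z)) \<in> borel_measurable ?F" if "g \<in> borel_measurable borel" for g :: "'a \<Rightarrow> real"
    using that by (intro measurable_compose[OF measurable_fst_vimage_algebra])
      (simp add: measurable_cong_sets[OF sets_mu refl])
  have bounded: "AE z in \<gamma>. \<bar>snd z \<bullet> i\<bar> \<le> R" "AE z in \<gamma>. \<bar>T (fst z) \<bullet> i\<bar> \<le> R"
    if "i \<in> Basis" for i
  proof -
    have "\<bar>y \<bullet> i\<bar> \<le> R" if "y \<in> T ` K" for y
      using Basis_le_norm[OF \<open>i \<in> Basis\<close>, of y] R[OF that] by simp
    then show "AE z in \<gamma>. \<bar>snd z \<bullet> i\<bar> \<le> R" "AE z in \<gamma>. \<bar>T (fst z) \<bullet> i\<bar> \<le> R"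
      using AE_coupling[OF coupling] by (auto elim!: eventually_mono)
  qed
  have coordinate: "integrable \<gamma> (\<lambda>z. (Tb (fst z) \<bullet> i - T (fst z) \<bullet> i)\<^sup>2) \<and>
      (\<integral>z. (Tb (fst z) \<bullet> i - T (fst z) \<bullet> i)\<^sup>2 \<partial>\<gamma>) \<le> (\<integral>z. (snd z \<bullet> i - T (fst z) \<bullet> i)\<^sup>2 \<partial>\<gamma>)"
    if i: "i \<in> Basis" for i
    using prob_space_coupling[OF coupling]
    by (intro real_cond_exp_sq_dist_le[OF sigma_finite_subalgebra_fst_coupling _ _ bounded(1)[OF i]
          _ bounded(2)[OF i] _ real_cond_exp_snd_barycentric_projection[OF bp i]] measurable_F)
       (auto simp: prob_space_def measurable_cong_sets[OF sets_coupling[OF coupling] refl])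
  have integrable_coordinate: "integrable \<gamma> (\<lambda>z. (snd z \<bullet> i - T (fst z) \<bullet> i)\<^sup>2)" for i
    by (intro integrable_coupling_continuous[OF coupling])
       (auto intro!: continuous_intros continuous_on_compose2[OF continuous_T])
  have "(\<integral>x. (norm (Tb x - T x))\<^sup>2 \<partial>\<mu>) = (\<integral>z. (\<Sum>i\<in>Basis. (Tb (fst z) \<bullet> i - T (fst z) \<bullet> i)\<^sup>2) \<partial>\<gamma>)"
    using distr_fst_coupling[OF coupling] measurable_fst_coupling[OF coupling]
    by (subst (1) distr_fst_coupling[OF coupling, symmetric], subst integral_distr)
       (auto simp: power2_norm_eq_sum_Basis inner_diff_left)
  also have "\<dots> \<le> (\<integral>z. (\<Sum>i\<in>Basis. (snd z \<bullet> i - T (fst z) \<bullet> i)\<^sup>2) \<partial>\<gamma>)"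
    using coordinate integrable_coordinate by (simp add: Bochner_Integration.integral_sum sum_mono)
  also have "\<dots> = (\<integral>(x, y). (norm (y - T x))\<^sup>2 \<partial>\<gamma>)"
    by (simp add: power2_norm_eq_sum_Basis inner_diff_left case_prod_beta')
  finally show ?thesis .
qed

end

end

lemma push_forward_of_graph_coupling:
  assumes "coupling \<mu> \<nu> (distr \<mu> (\<mu> \<Otimes>\<^sub>M \<nu>) (\<lambda>x. (x, T x)))" and "T \<in> measurable \<mu> \<nu>"
  shows "\<nu> = distr \<mu> \<nu> T"
proof -
  have "(\<lambda>x. (x, T x)) \<in> measurable \<mu> (\<mu> \<Otimes>\<^sub>M \<nu>)"
    using assms(2) by (intro measurable_Pair) auto
  then show ?thesis
    using assms(1) by (simp add: coupling_def distr_distr o_def)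
qed

theorem proposition4p5:
  fixes \<mu>m \<mu>p :: "'a::euclidean_space measure"
    and f :: "'a \<Rightarrow> real" and T :: "'a \<Rightarrow> 'a" and M :: real
    and \<gamma> :: "real \<Rightarrow> ('a \<times> 'a) measure" and Tb :: "real \<Rightarrow> 'a \<Rightarrow> 'a"
  assumes "compactly_supported_prob \<mu>m" and "compactly_supported_prob \<mu>p"
    and "convex_on UNIV f"
    and "\<And>x. (f has_derivative (\<lambda>h. T x \<bullet> h)) (at x)"
    and "M-lipschitz_on UNIV T"
    and "optimal_plan \<mu>m \<mu>p (distr \<mu>m (\<mu>m \<Otimes>\<^sub>M \<mu>p) (\<lambda>x. (x, T x)))"
    and "\<And>\<epsilon>. \<epsilon> > 0 \<Longrightarrow> optimal_entropic_plan \<mu>m \<mu>p \<epsilon> (\<gamma> \<epsilon>)"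
    and "\<And>\<epsilon>. \<epsilon> > 0 \<Longrightarrow> barycentric_projection (\<gamma> \<epsilon>) \<mu>m (Tb \<epsilon>)"
  shows "(\<exists>C \<epsilon>0. \<epsilon>0 > 0 \<and> (\<forall>\<epsilon>. 0 < \<epsilon> \<and> \<epsilon> < \<epsilon>0 \<longrightarrow>
            (\<integral> (x, y). (norm (y - T x))\<^sup>2 \<partial>(\<gamma> \<epsilon>))
              \<le> M * (real DIM('a) * \<epsilon> * ln (1 / \<epsilon>) + C * \<epsilon>)))
       \<and> (\<exists>C \<epsilon>0. \<epsilon>0 > 0 \<and> (\<forall>\<epsilon>. 0 < \<epsilon> \<and> \<epsilon> < \<epsilon>0 \<longrightarrow>
            (\<integral> x. (norm (Tb \<epsilon> x - T x))\<^sup>2 \<partial>\<mu>m)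
              \<le> M * (real DIM('a) * \<epsilon> * ln (1 / \<epsilon>) + C * \<epsilon>)))"
proof -
  obtain K where sets_mu: "sets \<mu>m = sets borel" and "prob_space \<mu>m" "compact K" "AE x in \<mu>m. x \<in> K"
    using assms(1) unfolding compactly_supported_prob_def by blast
  moreover have sets_nu: "sets \<mu>p = sets borel" and "prob_space \<mu>p"
    using assms(2) unfolding compactly_supported_prob_def by blast+
  moreover have "\<mu>p = distr \<mu>m \<mu>p T"
    using assms(6) lipschitz_on_continuous_on[OF assms(5)]
    by (intro push_forward_of_graph_coupling)
       (auto simp: optimal_plan_def measurable_cong_sets[OF sets_mu sets_nu] borel_measurable_continuous_onI)
  ultimately interpret lipschitz_brenier_map \<mu>m \<mu>p f T M K
    using assms(3-5) by (simp add: lipschitz_brenier_map_def)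
  obtain C where deviation: "\<And>\<epsilon>. 0 < \<epsilon> \<Longrightarrow> \<epsilon> < 1 \<Longrightarrow>
      (\<integral>(x, y). (norm (y - T x))\<^sup>2 \<partial>\<gamma> \<epsilon>) \<le> M * (real DIM('a) * \<epsilon> * ln (1 / \<epsilon>) + C * \<epsilon>)"
    using entropic_plan_deviation_asymptotics assms(7) by metis
  have "(\<integral>x. (norm (Tb \<epsilon> x - T x))\<^sup>2 \<partial>\<mu>m) \<le> (\<integral>(x, y). (norm (y - T x))\<^sup>2 \<partial>\<gamma> \<epsilon>)" if "0 < \<epsilon>" for \<epsilon>
    using assms(7,8)[OF that]
    by (intro barycentric_projection_deviation_le) (auto simp: optimal_entropic_plan_def)
  with deviation show ?thesis
    by (intro conjI exI[of _ C] exI[of _ 1]) (auto intro: order_trans)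
qed

end
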